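(* Assume the standing assumptions (A1)–(A5) below, and in addition that $|\eta|>0$ on $E$ and $f\in C^2(E;[0,\infty))$. Let $h\in C^2(F)$, where $F=E\times(0,\infty)$. Set $\phi(z,x)=p(z)h(z,x)$ and $\psi(z,x)=\int_0^xh(z,y)\,dy$. Let $\tilde L^R$ be the formal adjoint of $L^R$. Then $\tilde L^R\phi=p\,\partial_x(L\psi)$. In particular, if $L\psi=0$ then $\tilde L^R\phi=0$.
   Context: Let $d,k\ge1$, $\gamma\in(0,1]$, and let $E\subseteq\mathbb R^d$ be open and connected. The standing assumptions are: (A1) there are open, connected, bounded sets $E_n$ with $C^{2,\gamma}$ boundaries, $\bar E_n\subset E_{n+1}$ and $\bigcup E_n=E$; (A2) $m\in C^{1,\gamma}(E;\mathbb R^d)$ and $c\in C^{2,\gamma}(E;\mathbb S^d_{++})$; (A3) the martingale problem for $L^Z=\tfrac12c^{ij}\partial^2_{ij}+m^i\partial_i$ on $E$ is well posed with a recurrent solution, and there is a strictly positive $p\in C^{2,\gamma}(E)$ with $\int_Ep=1$ and $\tilde L^Zp=0$, where $\tilde L^Z=\tfrac12c^{ij}\partial^2_{ij}-(m^i-\partial_jc^{ij})\partial_i-(\partial_im^i-\tfrac12\partial^2_{ij}c^{ij})$; (A4) $a\in C^{1,\gamma}(E;[0,\infty))$, $\eta\in C^{2,\gamma}(E;\mathbb R^k)$, $\theta\in C^{2,\gamma}(E;\mathbb R^d)$; (A5) $f:E\to[0,\infty)$ with $0<\int fp<\infty$, and for some $\varepsilon>0$, $\big(a+\tfrac{1-\varepsilon}2(\theta'c\theta+\eta'\eta)\big)_-\in\mathbb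 L^1(E,p)$ with positive $p$-integral of $a+\tfrac{1-\varepsilon}2(\theta'c\theta+\eta'\eta)$. For $(z,x)\in F$, let $A(z,x)$ be the $(d+1)\times(d+1)$ symmetric block matrix with blocks $c(z)$, $xc\theta(z)$, $x\theta'c(z)$ and $x^2(\theta'c\theta+\eta'\eta)(z)$. Let $b(z,x)=(m(z),\,-f(z)+x(a+\theta'c\theta+\eta'\eta)(z))$, and let $b^R(z,x)=\big((c\nabla p/p+\operatorname{div}c-m)(z),\ f(z)-x(a-\theta'c\nabla p/p-\nabla\cdot(c\theta))(z)\big)$. Then $L=\tfrac12A^{ij}\partial^2_{ij}+b^i\partial_i$ and $L^R=\tfrac12A^{ij}\partial^2_{ij}+(b^R)^i\partial_i$, with derivatives taken in the variables $(z,x)$ and summation over repeated indices. Here $(\operatorname{div}c)^i=\sum_j\partial_jc^{ij}$ and $\nabla\cdot$ is the vector divergence. *)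

theory Defs
  imports "HOL-Analysis.Analysis"
begin

definition pd :: "'d::finite \<Rightarrow> (real^'d \<Rightarrow> real) \<Rightarrow> real^'d \<Rightarrow> real" where
  "pd i g z = deriv (\<lambda>t. g (z + t *\<^sub>R axis i 1)) 0"

fun pds :: "'d::finite list \<Rightarrow> (real^'d \<Rightarrow> real) \<Rightarrow> real^'d \<Rightarrow> real" where
  "pds [] g = g"
| "pds (i # is) g = pd i (pds is g)"

fun Ck :: "nat \<Rightarrow> (real^'d::finite) set \<Rightarrow> (real^'d \<Rightarrow> real) \<Rightarrow> bool" where
  "Ck 0 S g \<longleftrightarrow> continuous_on S g"
| "Ck (Suc k) S g \<longleftrightarrow> g differentiable_on S \<and> (\<forall>i. Ck k S (pd i g))"

definition loc_holder :: "real \<Rightarrow> (real^'d::finite) set \<Rightarrow> (real^'d \<Rightarrow> real) \<Rightarrow> bool" where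
  "loc_holder \<gamma> S g \<longleftrightarrow>
     (\<forall>K. compact K \<and> K \<subseteq> S \<longrightarrow>
        (\<exists>L. \<forall>x\<in>K. \<forall>y\<in>K. \<bar>g x - g y\<bar> \<le> L * dist x y powr \<gamma>))"

definition Ckg :: "nat \<Rightarrow> real \<Rightarrow> (real^'d::finite) set \<Rightarrow> (real^'d \<Rightarrow> real) \<Rightarrow> bool" where
  "Ckg k \<gamma> S g \<longleftrightarrow> Ck k S g \<and> (\<forall>is. length is = k \<longrightarrow> loc_holder \<gamma> S (pds is g))"

definition Ckg_vec :: "nat \<Rightarrow> real \<Rightarrow> (real^'d::finite) set \<Rightarrow> (real^'d \<Rightarrow> real^'n::finite) \<Rightarrow> bool" where
  "Ckg_vec k \<gamma> S v \<longleftrightarrow> (\<forall>i. Ckg k \<gamma> S (\<lambda>z. v z $ i))"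

definition Ckg_mat :: "nat \<Rightarrow> real \<Rightarrow> (real^'d::finite) set \<Rightarrow> (real^'d \<Rightarrow> real^'d^'d) \<Rightarrow> bool" where
  "Ckg_mat k \<gamma> S M \<longleftrightarrow> (\<forall>i j. Ckg k \<gamma> S (\<lambda>z. M z $ i $ j))"

definition spd :: "real^'d^'d \<Rightarrow> bool" where
  "spd M \<longleftrightarrow> transpose M = M \<and> (\<forall>v. v \<noteq> 0 \<longrightarrow> v \<bullet> (M *v v) > 0)"

definition grad :: "(real^'d::finite \<Rightarrow> real) \<Rightarrow> real^'d \<Rightarrow> real^'d" where
  "grad g z = (\<chi> i. pd i g z)"

definition divc :: "(real^'d::finite \<Rightarrow> real^'d^'d) \<Rightarrow> real^'d \<Rightarrow> real^'d" where
  "divc c z = (\<chi> i. \<Sum>j\<in>UNIV. pd j (\<lambda>w. c w $ i $ j) z)"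

definition vdiv :: "(real^'d::finite \<Rightarrow> real^'d) \<Rightarrow> real^'d \<Rightarrow> real" where
  "vdiv v z = (\<Sum>i\<in>UNIV. pd i (\<lambda>w. v w $ i) z)"

text \<open>The operator tilde L^Z (formal adjoint of L^Z), as written in (A3).\<close>
definition LZadj :: "(real^'d::finite \<Rightarrow> real^'d) \<Rightarrow> (real^'d \<Rightarrow> real^'d^'d)
     \<Rightarrow> (real^'d \<Rightarrow> real) \<Rightarrow> real^'d \<Rightarrow> real" where
  "LZadj m c g z =
     (1/2) * (\<Sum>i\<in>UNIV. \<Sum>j\<in>UNIV. c z $ i $ j * pd i (pd j g) z)
     - (\<Sum>i\<in>UNIV. (m z $ i - (\<Sum>j\<in>UNIV. pd j (\<lambda>w. c w $ i $ j) z)) * pd i g z)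
     - ((\<Sum>i\<in>UNIV. pd i (\<lambda>w. m w $ i) z)
        - (1/2) * (\<Sum>i\<in>UNIV. \<Sum>j\<in>UNIV. pd i (pd j (\<lambda>w. c w $ i $ j)) z)) * g z"

section \<open>Functions on F = E x (0,inf): variables (z,x); index None = x, Some i = z_i\<close>

definition pdo :: "'d::finite option \<Rightarrow> (real^'d \<Rightarrow> real \<Rightarrow> real) \<Rightarrow> real^'d \<Rightarrow> real \<Rightarrow> real" where
  "pdo a u z x = (case a of
      None \<Rightarrow> deriv (\<lambda>t. u z t) x
    | Some i \<Rightarrow> deriv (\<lambda>t. u (z + t *\<^sub>R axis i 1) x) 0)"

fun CkF :: "nat \<Rightarrow> ((real^'d::finite) \<times> real) set \<Rightarrow> (real^'d \<Rightarrow> real \<Rightarrow> real) \<Rightarrow> bool" where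
  "CkF 0 S u \<longleftrightarrow> continuous_on S (case_prod u)"
| "CkF (Suc k) S u \<longleftrightarrow> (case_prod u) differentiable_on S \<and> (\<forall>a. CkF k S (pdo a u))"

definition genOp :: "('d::finite option \<Rightarrow> 'd option \<Rightarrow> real^'d \<Rightarrow> real \<Rightarrow> real)
    \<Rightarrow> ('d option \<Rightarrow> real^'d \<Rightarrow> real \<Rightarrow> real)
    \<Rightarrow> (real^'d \<Rightarrow> real \<Rightarrow> real) \<Rightarrow> real^'d \<Rightarrow> real \<Rightarrow> real" where
  "genOp A b u z x =
     (1/2) * (\<Sum>a\<in>UNIV. \<Sum>a'\<in>UNIV. A a a' z x * pdo a (pdo a' u) z x)
     + (\<Sum>a\<in>UNIV. b a z x * pdo a u z x)"

definition adjOp :: "('d::finite option \<Rightarrow> 'd option \<Rightarrow> real^'d \<Rightarrow> real \<Rightarrow> real)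
    \<Rightarrow> ('d option \<Rightarrow> real^'d \<Rightarrow> real \<Rightarrow> real)
    \<Rightarrow> (real^'d \<Rightarrow> real \<Rightarrow> real) \<Rightarrow> real^'d \<Rightarrow> real \<Rightarrow> real" where
  "adjOp A b u z x =
     (1/2) * (\<Sum>a\<in>UNIV. \<Sum>a'\<in>UNIV. pdo a (pdo a' (\<lambda>w y. A a a' w y * u w y)) z x)
     - (\<Sum>a\<in>UNIV. pdo a (\<lambda>w y. b a w y * u w y) z x)"

definition Amat :: "(real^'d::finite \<Rightarrow> real^'d^'d) \<Rightarrow> (real^'d \<Rightarrow> real^'d) \<Rightarrow> (real^'d \<Rightarrow> real^'k::finite)
    \<Rightarrow> 'd option \<Rightarrow> 'd option \<Rightarrow> real^'d \<Rightarrow> real \<Rightarrow> real" where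
  "Amat c \<theta> \<eta> a a' z x = (case (a, a') of
      (Some i, Some j) \<Rightarrow> c z $ i $ j
    | (Some i, None) \<Rightarrow> x * (c z *v \<theta> z) $ i
    | (None, Some j) \<Rightarrow> x * (\<theta> z v* c z) $ j
    | (None, None) \<Rightarrow> x\<^sup>2 * (\<theta> z \<bullet> (c z *v \<theta> z) + \<eta> z \<bullet> \<eta> z))"

definition bL :: "(real^'d::finite \<Rightarrow> real^'d) \<Rightarrow> (real^'d \<Rightarrow> real^'d^'d) \<Rightarrow> (real^'d \<Rightarrow> real)
    \<Rightarrow> (real^'d \<Rightarrow> real^'d) \<Rightarrow> (real^'d \<Rightarrow> real^'k::finite) \<Rightarrow> (real^'d \<Rightarrow> real)
    \<Rightarrow> 'd option \<Rightarrow> real^'d \<Rightarrow> real \<Rightarrow> real" where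
  "bL m c a \<theta> \<eta> f idx z x = (case idx of
      Some i \<Rightarrow> m z $ i
    | None \<Rightarrow> - f z + x * (a z + \<theta> z \<bullet> (c z *v \<theta> z) + \<eta> z \<bullet> \<eta> z))"

definition bR :: "(real^'d::finite \<Rightarrow> real^'d) \<Rightarrow> (real^'d \<Rightarrow> real^'d^'d) \<Rightarrow> (real^'d \<Rightarrow> real)
    \<Rightarrow> (real^'d \<Rightarrow> real^'d) \<Rightarrow> (real^'d \<Rightarrow> real) \<Rightarrow> (real^'d \<Rightarrow> real)
    \<Rightarrow> 'd option \<Rightarrow> real^'d \<Rightarrow> real \<Rightarrow> real" where
  "bR m c a \<theta> f p idx z x = (case idx of
      Some i \<Rightarrow> ((c z *v grad p z) /\<^sub>R p z + divc c z - m z) $ i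
    | None \<Rightarrow> f z - x * (a z - \<theta> z \<bullet> ((c z *v grad p z) /\<^sub>R p z)
                         - vdiv (\<lambda>w. c w *v \<theta> w) z))"

end

theory Submission
  imports Defs
begin

text \<open>
  Since \<open>\<psi>\<^sub>x = h\<close> and mixed partial derivatives commute, \<open>\<partial>\<^sub>x (L\<psi>)\<close> is an explicit
  second order expression in \<open>h\<close>. Expanding \<open>\<tilde>L\<^sup>R(p h)\<close> by the product rule and comparing
  coefficients (using the symmetry of \<open>c\<close>), the two sides differ by \<open>h \<cdot> \<tilde>L\<^sup>Z p\<close>, which
  vanishes because \<open>p\<close> is the stationary density.
\<close>

section \<open>Mixed partial derivatives in two real variables\<close>

lemma mvt_from_0:
  fixes f f' :: "real \<Rightarrow> real"
  assumes "\<And>\<xi>. \<bar>\<xi>\<bar> \<le> \<bar>b\<bar> \<Longrightarrow> (f has_real_derivative f' \<xi>) (at \<xi>)"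
  shows "\<exists>\<xi>. \<bar>\<xi>\<bar> \<le> \<bar>b\<bar> \<and> f b - f 0 = b * f' \<xi>"
proof -
  consider "b > 0" | "b = 0" | "b < 0" by linarith
  then show ?thesis
  proof cases
    case 1
    with MVT2[OF 1, of f f'] assms obtain \<xi> where "0 < \<xi>" "\<xi> < b" "f b - f 0 = (b - 0) * f' \<xi>"
      by auto
    then show ?thesis by (intro exI[of _ \<xi>]) auto
  next
    case 2
    then show ?thesis by (intro exI[of _ 0]) auto
  next
    case 3
    with MVT2[OF 3, of f f'] assms obtain \<xi> where "b < \<xi>" "\<xi> < 0" "f 0 - f b = (0 - b) * f' \<xi>"
      by auto
    with 3 show ?thesis by (intro exI[of _ \<xi>]) (auto simp: algebra_simps)
  qed
qed

text \<open>
  The second difference quotient of \<open>G\<close> equals a value of \<open>G\<^sub>s\<^sub>t\<close> by two applications of the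
  mean value theorem; letting \<open>s \<rightarrow> 0\<close> turns it into the difference quotient of \<open>G\<^sub>s\<close> in \<open>t\<close>.
  So only continuity of \<open>G\<^sub>s\<^sub>t\<close> at the origin is needed.
\<close>
lemma has_real_derivative_mixed_partial:
  fixes G Gs Gt Gst :: "real \<Rightarrow> real \<Rightarrow> real"
  assumes r: "r > 0"
    and ds: "\<And>s t. \<bar>s\<bar> < r \<Longrightarrow> \<bar>t\<bar> < r \<Longrightarrow> ((\<lambda>s'. G s' t) has_real_derivative Gs s t) (at s)"
    and dt: "\<And>s t. \<bar>s\<bar> < r \<Longrightarrow> \<bar>t\<bar> < r \<Longrightarrow> ((\<lambda>t'. G s t') has_real_derivative Gt s t) (at t)"
    and dst: "\<And>s t. \<bar>s\<bar> < r \<Longrightarrow> \<bar>t\<bar> < r \<Longrightarrow> ((\<lambda>s'. Gt s' t) has_real_derivative Gst s t) (at s)"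
    and cont: "\<And>e. e > 0 \<Longrightarrow> \<exists>d>0. \<forall>s t. \<bar>s\<bar> < d \<longrightarrow> \<bar>t\<bar> < d \<longrightarrow> \<bar>Gst s t - Gst 0 0\<bar> \<le> e"
  shows "((\<lambda>t. Gs 0 t) has_real_derivative Gst 0 0) (at 0)"
proof -
  let ?D = "Gst 0 0"
  have quotient_close: "\<exists>d>0. \<forall>t. t \<noteq> 0 \<and> \<bar>t\<bar> < d \<longrightarrow> \<bar>(Gs 0 t - Gs 0 0) / t - ?D\<bar> \<le> e"
    if e: "e > 0" for e
  proof -
    obtain d0 where d0: "d0 > 0" "\<forall>s t. \<bar>s\<bar> < d0 \<longrightarrow> \<bar>t\<bar> < d0 \<longrightarrow> \<bar>Gst s t - ?D\<bar> \<le> e"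
      using cont[OF e] by auto
    define d where "d = min d0 r"
    have d: "d > 0" "d \<le> d0" "d \<le> r" using d0 r by (auto simp: d_def)
    have "\<bar>(Gs 0 t - Gs 0 0) / t - ?D\<bar> \<le> e" if t: "t \<noteq> 0" "\<bar>t\<bar> < d" for t
    proof -
      define q where "q s = ((G s t - G 0 t) / s - (G s 0 - G 0 0) / s) / t" for s
      have q_close: "\<bar>q s - ?D\<bar> \<le> e" if s: "s \<noteq> 0" "\<bar>s\<bar> < d" for s
      proof -
        obtain \<tau> where tau: "\<bar>\<tau>\<bar> \<le> \<bar>t\<bar>" "(G s t - G 0 t) - (G s 0 - G 0 0) = t * (Gt s \<tau> - Gt 0 \<tau>)"
          using mvt_from_0[of t "\<lambda>\<tau>. G s \<tau> - G 0 \<tau>" "\<lambda>\<tau>. Gt s \<tau> - Gt 0 \<tau>"] s t d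
          by (auto simp: DERIV_diff dt)
        obtain \<sigma> where sigma: "\<bar>\<sigma>\<bar> \<le> \<bar>s\<bar>" "Gt s \<tau> - Gt 0 \<tau> = s * Gst \<sigma> \<tau>"
          using mvt_from_0[of s "\<lambda>\<sigma>. Gt \<sigma> \<tau>" "\<lambda>\<sigma>. Gst \<sigma> \<tau>"] s t d tau by (auto simp: dst)
        have "(G s t - G 0 t) - (G s 0 - G 0 0) = s * t * Gst \<sigma> \<tau>"
          using tau sigma by simp
        then have "q s = Gst \<sigma> \<tau>"
          using s t unfolding q_def by (simp add: diff_divide_distrib[symmetric])
        then show ?thesis using d0(2) sigma tau s t d by auto
      qed
      have "((\<lambda>s. \<bar>q s - ?D\<bar>) \<longlongrightarrow> \<bar>(Gs 0 t - Gs 0 0) / t - ?D\<bar>) (at 0)"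
        unfolding q_def using t d r ds[of 0 t] ds[of 0 0]
        by (intro tendsto_intros) (auto simp: DERIV_def)
      moreover have "eventually (\<lambda>s. \<bar>q s - ?D\<bar> \<le> e) (at 0)"
        unfolding eventually_at using d q_close by (auto simp: dist_real_def)
      ultimately show ?thesis
        by (rule tendsto_upperbound) simp
    qed
    then show ?thesis using d by blast
  qed
  show ?thesis
    unfolding DERIV_def
  proof (rule tendstoI)
    fix e :: real assume e: "e > 0"
    obtain d where d: "d > 0" "\<forall>t. t \<noteq> 0 \<and> \<bar>t\<bar> < d \<longrightarrow> \<bar>(Gs 0 t - Gs 0 0) / t - ?D\<bar> \<le> e/2"
      using quotient_close e by (meson half_gt_zero)
    then show "eventually (\<lambda>t. dist ((Gs 0 (0 + t) - Gs 0 0) / t) ?D < e) (at 0)"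
      unfolding eventually_at using e by (intro exI[of _ d]) (auto simp: dist_real_def)
  qed
qed

section \<open>Partial derivatives in the variables \<open>(z, x)\<close>\<close>

definition line_point :: "'d::finite option \<Rightarrow> real^'d \<Rightarrow> real \<Rightarrow> real \<Rightarrow> (real^'d) \<times> real" where
  "line_point a w y t = (case a of None \<Rightarrow> (w, y + t) | Some i \<Rightarrow> (w + t *\<^sub>R axis i 1, y))"

definition line_fun ::
    "'d::finite option \<Rightarrow> (real^'d \<Rightarrow> real \<Rightarrow> real) \<Rightarrow> real^'d \<Rightarrow> real \<Rightarrow> real \<Rightarrow> real" where
  "line_fun a u w y t = (case a of None \<Rightarrow> u w (y + t) | Some i \<Rightarrow> u (w + t *\<^sub>R axis i 1) y)"

definition pdiffable :: "'d::finite option \<Rightarrow> (real^'d \<Rightarrow> real \<Rightarrow> real) \<Rightarrow> real^'d \<Rightarrow> real \<Rightarrow> bool" where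
  "pdiffable a u w y \<longleftrightarrow> line_fun a u w y differentiable (at 0)"

lemma line_fun_eq_comp: "line_fun a u w y = case_prod u \<circ> line_point a w y"
  by (rule ext) (auto simp: line_fun_def line_point_def split: option.split)

lemma line_point_0 [simp]: "line_point a w y 0 = (w, y)"
  by (auto simp: line_point_def split: option.split)

lemma line_point_differentiable: "line_point a w y differentiable (at t)"
proof (cases a)
  case None
  have "((\<lambda>t. (w, y + t)) has_derivative (\<lambda>h. (0, h))) (at t)"
    by (auto intro!: derivative_eq_intros)
  then show ?thesis using None unfolding line_point_def by (auto intro: differentiableI)
next
  case (Some i)
  have "((\<lambda>t. (w + t *\<^sub>R axis i 1, y)) has_derivative (\<lambda>h. (h *\<^sub>R axis i 1, 0))) (at t)"
    by (auto intro!: derivative_eq_intros)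
  then show ?thesis using Some unfolding line_point_def by (auto intro: differentiableI)
qed

lemma line_fun_0 [simp]: "line_fun a u w y 0 = u w y"
  by (auto simp: line_fun_def split: option.split)

lemma pdo_eq_deriv_line_fun: "pdo a u w y = deriv (line_fun a u w y) 0"
proof (cases a)
  case None
  then show ?thesis
    unfolding pdo_def line_fun_def by (simp add: deriv_shift_0[of "\<lambda>t. u w t" y] o_def)
qed (unfold pdo_def line_fun_def, simp)

lemma pdiffable_has_pdo: "pdiffable a u w y \<Longrightarrow> (line_fun a u w y has_real_derivative pdo a u w y) (at 0)"
  unfolding pdiffable_def pdo_eq_deriv_line_fun by (simp add: DERIV_deriv_iff_real_differentiable)

lemma pdiffable_pdoI:
  "(line_fun a u w y has_real_derivative D) (at 0) \<Longrightarrow> pdiffable a u w y \<and> pdo a u w y = D"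
  unfolding pdiffable_def pdo_eq_deriv_line_fun using DERIV_imp_deriv real_differentiable_def by blast

lemma line_fun_arith:
  "line_fun a (\<lambda>w y. k) w y = (\<lambda>t. k)"
  "line_fun a (\<lambda>w y. u w y * v w y) w y = (\<lambda>t. line_fun a u w y t * line_fun a v w y t)"
  "line_fun a (\<lambda>w y. u w y + v w y) w y = (\<lambda>t. line_fun a u w y t + line_fun a v w y t)"
  "line_fun a (\<lambda>w y. u w y - v w y) w y = (\<lambda>t. line_fun a u w y t - line_fun a v w y t)"
  "line_fun a (\<lambda>w y. - u w y) w y = (\<lambda>t. - line_fun a u w y t)"
  "line_fun a (\<lambda>w y. u w y / k) w y = (\<lambda>t. line_fun a u w y t / k)"
  "line_fun a (\<lambda>w y. \<Sum>k\<in>S. U k w y) w y = (\<lambda>t. \<Sum>k\<in>S. line_fun a (U k) w y t)"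
  by (auto simp: line_fun_def split: option.split)

lemma has_derivative_line_fun_const: "(line_fun a (\<lambda>w y. k) w y has_real_derivative 0) (at 0)"
  by (simp add: line_fun_arith)

lemma has_derivative_line_fun_mult:
  assumes "pdiffable a u w y" "pdiffable a v w y"
  shows "(line_fun a (\<lambda>w y. u w y * v w y) w y
           has_real_derivative pdo a u w y * v w y + u w y * pdo a v w y) (at 0)"
  using DERIV_mult[OF assms[THEN pdiffable_has_pdo]] by (simp add: line_fun_arith algebra_simps)

lemma has_derivative_line_fun_add:
  assumes "pdiffable a u w y" "pdiffable a v w y"
  shows "(line_fun a (\<lambda>w y. u w y + v w y) w y has_real_derivative pdo a u w y + pdo a v w y) (at 0)"
  using DERIV_add[OF assms[THEN pdiffable_has_pdo]] by (simp add: line_fun_arith)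

lemma has_derivative_line_fun_diff:
  assumes "pdiffable a u w y" "pdiffable a v w y"
  shows "(line_fun a (\<lambda>w y. u w y - v w y) w y has_real_derivative pdo a u w y - pdo a v w y) (at 0)"
  using DERIV_diff[OF assms[THEN pdiffable_has_pdo]] by (simp add: line_fun_arith)

lemma has_derivative_line_fun_minus:
  assumes "pdiffable a u w y"
  shows "(line_fun a (\<lambda>w y. - u w y) w y has_real_derivative - pdo a u w y) (at 0)"
  using DERIV_minus[OF assms[THEN pdiffable_has_pdo]] by (simp add: line_fun_arith)

lemma has_derivative_line_fun_divide:
  assumes "pdiffable a u w y"
  shows "(line_fun a (\<lambda>w y. u w y / k) w y has_real_derivative pdo a u w y / k) (at 0)"
  using DERIV_cdivide[OF assms[THEN pdiffable_has_pdo]] by (simp add: line_fun_arith)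

lemma has_derivative_line_fun_sum:
  assumes "\<And>k. k \<in> S \<Longrightarrow> pdiffable a (U k) w y"
  shows "(line_fun a (\<lambda>w y. \<Sum>k\<in>S. U k w y) w y has_real_derivative (\<Sum>k\<in>S. pdo a (U k) w y)) (at 0)"
  unfolding line_fun_arith by (rule DERIV_sum) (simp add: assms pdiffable_has_pdo)

lemmas has_derivative_line_fun_arith = has_derivative_line_fun_const has_derivative_line_fun_mult
  has_derivative_line_fun_add has_derivative_line_fun_diff has_derivative_line_fun_minus
  has_derivative_line_fun_divide has_derivative_line_fun_sum

lemmas pdiffable_arith [simp] = has_derivative_line_fun_arith[THEN pdiffable_pdoI, THEN conjunct1]
lemmas pdo_arith [simp] = has_derivative_line_fun_arith[THEN pdiffable_pdoI, THEN conjunct2]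
lemmas pdiffable_sum = has_derivative_line_fun_sum[THEN pdiffable_pdoI, THEN conjunct1]
lemmas pdo_sum = has_derivative_line_fun_sum[THEN pdiffable_pdoI, THEN conjunct2]

lemma pdo_Some_const_x: "pdo (Some i) (\<lambda>w y. g w) = (\<lambda>w y. pd i g w)"
  by (intro ext) (simp add: pdo_def pd_def)

lemma pdo_None_const_x [simp]: "pdo None (\<lambda>w y. g w) = (\<lambda>w y. 0)"
  by (intro ext) (simp add: pdo_def)

lemma pdiffable_None_const_x [simp]: "pdiffable None (\<lambda>w y. g w) w y"
  unfolding pdiffable_def line_fun_def by simp

lemma pdiffable_Some_const_x: "g differentiable (at w) \<Longrightarrow> pdiffable (Some i) (\<lambda>w y. g w) w y"
  unfolding pdiffable_def line_fun_def
  using differentiable_chain_at[of "\<lambda>t. w + t *\<^sub>R axis i 1" 0 g] by (simp add: o_def)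

lemma pdo_Some_x [simp]: "pdo (Some i) (\<lambda>w y. y) = (\<lambda>w y. 0)"
  by (intro ext) (simp add: pdo_def)

lemma pdo_None_x [simp]: "pdo None (\<lambda>w y. y) = (\<lambda>w y. 1)"
  by (intro ext) (simp add: pdo_def)

lemma pdiffable_x [simp]: "pdiffable a (\<lambda>w y. y) w y"
  unfolding pdiffable_def line_fun_def real_differentiable_def
  by (cases a) (auto intro!: derivative_eq_intros exI)

lemma differentiable_imp_pdiffable: "case_prod u differentiable (at (w, y)) \<Longrightarrow> pdiffable a u w y"
  unfolding pdiffable_def line_fun_eq_comp
  by (rule differentiable_chain_at[OF line_point_differentiable]) simp

lemma eventually_line_fun_eq:
  assumes F: "open F" "(w, y) \<in> F" and eq: "\<And>w' y'. (w', y') \<in> F \<Longrightarrow> X w' y' = Y w' y'"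
  shows "eventually (\<lambda>t. line_fun a X w y t = line_fun a Y w y t) (nhds 0)"
proof -
  have "isCont (line_point a w y) 0"
    using line_point_differentiable differentiable_imp_continuous_within by blast
  then have "eventually (\<lambda>t. line_point a w y t \<in> F) (nhds 0)"
    using F unfolding isCont_def eventually_nhds_conv_at by (auto intro: topological_tendstoD)
  then show ?thesis
    by eventually_elim (auto simp: line_fun_eq_comp eq split: prod.splits)
qed

lemma has_derivative_line_fun_cong:
  assumes "open F" "(w, y) \<in> F" "\<And>w' y'. (w', y') \<in> F \<Longrightarrow> X w' y' = Y w' y'"
  shows "(line_fun a X w y has_real_derivative D) (at 0) \<longleftrightarrow> (line_fun a Y w y has_real_derivative D) (at 0)"
  using eventually_line_fun_eq[OF assms] by (intro DERIV_cong_ev) auto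

lemma pdo_cong:
  assumes "open F" "(w, y) \<in> F" "\<And>w' y'. (w', y') \<in> F \<Longrightarrow> X w' y' = Y w' y'"
  shows "pdo a X w y = pdo a Y w y"
  using has_derivative_line_fun_cong[OF assms] unfolding pdo_eq_deriv_line_fun deriv_def by simp

lemma pdiffable_cong:
  assumes "open F" "(w, y) \<in> F" "\<And>w' y'. (w', y') \<in> F \<Longrightarrow> X w' y' = Y w' y'"
  shows "pdiffable a X w y \<longleftrightarrow> pdiffable a Y w y"
  using has_derivative_line_fun_cong[OF assms] unfolding pdiffable_def real_differentiable_def by simp

definition pdiffable_on :: "((real^'d::finite) \<times> real) set \<Rightarrow> (real^'d \<Rightarrow> real \<Rightarrow> real) \<Rightarrow> bool" where
  "pdiffable_on F u \<longleftrightarrow> (\<forall>w y a. (w, y) \<in> F \<longrightarrow> pdiffable a u w y)"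

definition pdiffable2_on :: "((real^'d::finite) \<times> real) set \<Rightarrow> (real^'d \<Rightarrow> real \<Rightarrow> real) \<Rightarrow> bool" where
  "pdiffable2_on F u \<longleftrightarrow> pdiffable_on F u \<and> (\<forall>a. pdiffable_on F (pdo a u))"

lemma pdiffable2_onD [simp]:
  "pdiffable2_on F u \<Longrightarrow> (w, y) \<in> F \<Longrightarrow> pdiffable a u w y"
  "pdiffable2_on F u \<Longrightarrow> (w, y) \<in> F \<Longrightarrow> pdiffable a (pdo b u) w y"
  unfolding pdiffable2_on_def pdiffable_on_def by blast+

lemma pdiffable_on_arith [simp]:
  "pdiffable_on F (\<lambda>w y. k)"
  "pdiffable_on F (\<lambda>w y. y)"
  "pdiffable_on F u \<Longrightarrow> pdiffable_on F v \<Longrightarrow> pdiffable_on F (\<lambda>w y. u w y * v w y)"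
  "pdiffable_on F u \<Longrightarrow> pdiffable_on F v \<Longrightarrow> pdiffable_on F (\<lambda>w y. u w y + v w y)"
  "pdiffable_on F u \<Longrightarrow> pdiffable_on F v \<Longrightarrow> pdiffable_on F (\<lambda>w y. u w y - v w y)"
  "(\<And>k. k \<in> S \<Longrightarrow> pdiffable_on F (U k)) \<Longrightarrow> pdiffable_on F (\<lambda>w y. \<Sum>k\<in>S. U k w y)"
  unfolding pdiffable_on_def by simp_all

lemma pdiffable_on_cong:
  assumes "open F" "\<And>w y. (w, y) \<in> F \<Longrightarrow> X w y = Y w y" "pdiffable_on F Y"
  shows "pdiffable_on F X"
  unfolding pdiffable_on_def
proof (intro allI impI)
  fix w y a assume wy: "(w, y) \<in> F"
  then show "pdiffable a X w y"
    using pdiffable_cong[where X=X and Y=Y, OF assms(1) wy assms(2)] assms(3) unfolding pdiffable_on_def by blast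
qed

lemma pdiffable2_onI:
  assumes F: "open F" and u: "pdiffable_on F u"
    and pdo_eq: "\<And>a w y. (w, y) \<in> F \<Longrightarrow> pdo a u w y = V a w y" and V: "\<And>a. pdiffable_on F (V a)"
  shows "pdiffable2_on F u"
  unfolding pdiffable2_on_def using u pdiffable_on_cong[OF F pdo_eq V] by blast

lemma pdiffable2_on_arith [simp]:
  assumes F: "open F"
  shows "pdiffable2_on F (\<lambda>w y. k)"
    and "pdiffable2_on F (\<lambda>w y. y)"
    and "pdiffable2_on F u \<Longrightarrow> pdiffable2_on F v \<Longrightarrow> pdiffable2_on F (\<lambda>w y. u w y * v w y)"
    and "pdiffable2_on F u \<Longrightarrow> pdiffable2_on F v \<Longrightarrow> pdiffable2_on F (\<lambda>w y. u w y + v w y)"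
    and "pdiffable2_on F u \<Longrightarrow> pdiffable2_on F v \<Longrightarrow> pdiffable2_on F (\<lambda>w y. u w y - v w y)"
    and "(\<And>k. k \<in> S \<Longrightarrow> pdiffable2_on F (U k)) \<Longrightarrow> pdiffable2_on F (\<lambda>w y. \<Sum>k\<in>S. U k w y)"
proof -
  show "pdiffable2_on F (\<lambda>w y. k)"
    by (rule pdiffable2_onI[OF F, where V="\<lambda>a w y. 0"]) simp_all
  show "pdiffable2_on F (\<lambda>w y. y)"
  proof (rule pdiffable2_onI[OF F, where V="\<lambda>a w y. if a = None then 1 else 0"])
    show "pdo a (\<lambda>w y. y) w y = (if a = None then 1 else 0)" for a w y
      by (cases a) simp_all
  qed simp_all
  show "pdiffable2_on F (\<lambda>w y. u w y * v w y)" if u: "pdiffable2_on F u" and v: "pdiffable2_on F v"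
    using u v pdiffable2_onD[OF u] pdiffable2_onD[OF v]
    by (intro pdiffable2_onI[OF F, where V="\<lambda>a w y. pdo a u w y * v w y + u w y * pdo a v w y"])
      (simp_all add: pdiffable2_on_def)
  show "pdiffable2_on F (\<lambda>w y. u w y + v w y)" if u: "pdiffable2_on F u" and v: "pdiffable2_on F v"
    using u v pdiffable2_onD[OF u] pdiffable2_onD[OF v]
    by (intro pdiffable2_onI[OF F, where V="\<lambda>a w y. pdo a u w y + pdo a v w y"])
      (simp_all add: pdiffable2_on_def)
  show "pdiffable2_on F (\<lambda>w y. u w y - v w y)" if u: "pdiffable2_on F u" and v: "pdiffable2_on F v"
    using u v pdiffable2_onD[OF u] pdiffable2_onD[OF v]
    by (intro pdiffable2_onI[OF F, where V="\<lambda>a w y. pdo a u w y - pdo a v w y"])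
      (simp_all add: pdiffable2_on_def)
  show "pdiffable2_on F (\<lambda>w y. \<Sum>k\<in>S. U k w y)" if U: "\<And>k. k \<in> S \<Longrightarrow> pdiffable2_on F (U k)"
    using U pdiffable2_onD(1)[OF U]
    by (intro pdiffable2_onI[OF F, where V="\<lambda>a w y. \<Sum>k\<in>S. pdo a (U k) w y"] pdo_sum)
      (simp_all add: pdiffable2_on_def)
qed

lemma pdo2_arith [simp]:
  assumes F: "open F" "(z, x) \<in> F" and u: "pdiffable2_on F u" and v: "pdiffable2_on F v"
  shows "pdo b (pdo a (\<lambda>w y. u w y * v w y)) z x =
      pdo b (pdo a u) z x * v z x + pdo a u z x * pdo b v z x
      + pdo b u z x * pdo a v z x + u z x * pdo b (pdo a v) z x"
    and "pdo b (pdo a (\<lambda>w y. u w y + v w y)) z x = pdo b (pdo a u) z x + pdo b (pdo a v) z x"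
    and "pdo b (pdo a (\<lambda>w y. u w y - v w y)) z x = pdo b (pdo a u) z x - pdo b (pdo a v) z x"
proof -
  have "pdo b (pdo a (\<lambda>w y. u w y * v w y)) z x
      = pdo b (\<lambda>w y. pdo a u w y * v w y + u w y * pdo a v w y) z x"
    using u v by (intro pdo_cong[OF F]) simp_all
  then show "pdo b (pdo a (\<lambda>w y. u w y * v w y)) z x =
      pdo b (pdo a u) z x * v z x + pdo a u z x * pdo b v z x
      + pdo b u z x * pdo a v z x + u z x * pdo b (pdo a v) z x"
    using F u v by (simp add: algebra_simps)
  have "pdo b (pdo a (\<lambda>w y. u w y + v w y)) z x = pdo b (\<lambda>w y. pdo a u w y + pdo a v w y) z x"
    using u v by (intro pdo_cong[OF F]) simp_all
  then show "pdo b (pdo a (\<lambda>w y. u w y + v w y)) z x = pdo b (pdo a u) z x + pdo b (pdo a v) z x"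
    using F u v by simp
  have "pdo b (pdo a (\<lambda>w y. u w y - v w y)) z x = pdo b (\<lambda>w y. pdo a u w y - pdo a v w y) z x"
    using u v by (intro pdo_cong[OF F]) simp_all
  then show "pdo b (pdo a (\<lambda>w y. u w y - v w y)) z x = pdo b (pdo a u) z x - pdo b (pdo a v) z x"
    using F u v by simp
qed

lemma pdo2_sum [simp]:
  assumes F: "open F" "(z, x) \<in> F" and U: "\<And>k. k \<in> S \<Longrightarrow> pdiffable2_on F (U k)"
  shows "pdo b (pdo a (\<lambda>w y. \<Sum>k\<in>S. U k w y)) z x = (\<Sum>k\<in>S. pdo b (pdo a (U k)) z x)"
proof -
  have "pdo b (pdo a (\<lambda>w y. \<Sum>k\<in>S. U k w y)) z x = pdo b (\<lambda>w y. \<Sum>k\<in>S. pdo a (U k) w y) z x"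
    using F U by (intro pdo_cong[OF F(1)] pdo_sum) (meson pdiffable2_onD)+
  also have "\<dots> = (\<Sum>k\<in>S. pdo b (pdo a (U k)) z x)"
    using F U by (intro pdo_sum pdiffable_sum) (meson pdiffable2_onD)+
  finally show ?thesis .
qed

lemma pdiffable_on_const_x:
  assumes "\<And>w y. (w, y) \<in> F \<Longrightarrow> g differentiable (at w)"
  shows "pdiffable_on F (\<lambda>w y. g w)"
  unfolding pdiffable_on_def
proof (intro allI impI)
  fix w y a assume "(w, y) \<in> F"
  then show "pdiffable a (\<lambda>w y. g w) w y"
    using assms by (cases a) (auto intro: pdiffable_Some_const_x)
qed

lemma pdiffable2_on_const_x:
  assumes "\<And>w y. (w, y) \<in> F \<Longrightarrow> g differentiable (at w)"
    and "\<And>w y i. (w, y) \<in> F \<Longrightarrow> pd i g differentiable (at w)"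
  shows "pdiffable2_on F (\<lambda>w y. g w)"
  unfolding pdiffable2_on_def
proof (intro conjI allI)
  show "pdiffable_on F (\<lambda>w y. g w)"
    using assms(1) by (rule pdiffable_on_const_x)
  show "pdiffable_on F (pdo a (\<lambda>w y. g w))" for a
    using assms(2) by (cases a) (auto simp: pdo_Some_const_x intro: pdiffable_on_const_x)
qed

lemma dist_coord_shift_le:
  fixes z :: "real^'d::finite"
  shows "dist (z + s *\<^sub>R axis i 1, x + t) (z, x) \<le> \<bar>s\<bar> + \<bar>t\<bar>"
proof -
  have "dist (z + s *\<^sub>R axis i 1, x + t) (z, x)
      = sqrt ((dist (z + s *\<^sub>R axis i 1) z)\<^sup>2 + (dist (x + t) x)\<^sup>2)"
    by (rule dist_Pair_Pair)
  also have "\<dots> \<le> \<bar>dist (z + s *\<^sub>R axis i 1) z\<bar> + \<bar>dist (x + t) x\<bar>"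
    by (rule sqrt_sum_squares_le_sum_abs)
  also have "\<dots> = \<bar>s\<bar> + \<bar>t\<bar>"
    by (simp add: dist_norm)
  finally show ?thesis .
qed

lemma isCont_coord_shift:
  fixes g :: "real^'d::finite \<Rightarrow> real \<Rightarrow> real"
  assumes "isCont (case_prod g) (z, x)" "e > 0"
  shows "\<exists>d>0. \<forall>s t. \<bar>s\<bar> < d \<longrightarrow> \<bar>t\<bar> < d \<longrightarrow> \<bar>g (z + s *\<^sub>R axis i 1) (x + t) - g z x\<bar> \<le> e"
proof -
  obtain d where d: "d > 0" "\<And>q. dist q (z, x) < d \<Longrightarrow> dist (case_prod g q) (g z x) < e"
    using assms unfolding continuous_at_eps_delta by fastforce
  have "\<bar>g (z + s *\<^sub>R axis i 1) (x + t) - g z x\<bar> \<le> e" if "\<bar>s\<bar> < d/2" "\<bar>t\<bar> < d/2" for s t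
    using d(2)[of "(z + s *\<^sub>R axis i 1, x + t)"] dist_coord_shift_le[of z s i x t] that
    by (simp add: dist_real_def)
  then show ?thesis
    using d(1) by (intro exI[of _ "d/2"]) auto
qed

lemma pdo_x_pdo_z_commute:
  fixes u :: "real^'d::finite \<Rightarrow> real \<Rightarrow> real"
  assumes F: "open F" "(z, x) \<in> F"
    and d1: "\<And>w y. (w, y) \<in> F \<Longrightarrow> pdiffable (Some i) u w y"
    and d2: "\<And>w y. (w, y) \<in> F \<Longrightarrow> pdiffable None u w y"
    and d3: "\<And>w y. (w, y) \<in> F \<Longrightarrow> pdiffable (Some i) (pdo None u) w y"
    and cont: "continuous_on F (case_prod (pdo (Some i) (pdo None u)))"
  shows "pdiffable None (pdo (Some i) u) z x
    \<and> pdo None (pdo (Some i) u) z x = pdo (Some i) (pdo None u) z x"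
proof -
  obtain \<epsilon> where eps: "\<epsilon> > 0" "ball (z, x) \<epsilon> \<subseteq> F"
    using F open_contains_ball by blast
  define r where "r = \<epsilon> / 2"
  have r: "r > 0" using eps by (simp add: r_def)
  have inF: "(z + s *\<^sub>R axis i 1, x + t) \<in> F" if "\<bar>s\<bar> < r" "\<bar>t\<bar> < r" for s t
  proof -
    have "dist (z + s *\<^sub>R axis i 1, x + t) (z, x) < \<epsilon>"
      using dist_coord_shift_le[of z s i x t] that unfolding r_def by linarith
    then show ?thesis using eps by (auto simp: dist_commute)
  qed
  have line_Some: "line_fun (Some i) v (z + s *\<^sub>R axis i 1) (x + t)
      = (\<lambda>\<tau>. v (z + (\<tau> + s) *\<^sub>R axis i 1) (x + t))" for v s t
    by (rule ext) (simp add: line_fun_def scaleR_add_left add_ac)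
  have line_None: "line_fun None v (z + s *\<^sub>R axis i 1) (x + t)
      = (\<lambda>\<tau>. v (z + s *\<^sub>R axis i 1) (x + (\<tau> + t)))" for v s t
    by (rule ext) (simp add: line_fun_def add_ac)
  define G where "G s t = u (z + s *\<^sub>R axis i 1) (x + t)" for s t
  define Gs where "Gs s t = pdo (Some i) u (z + s *\<^sub>R axis i 1) (x + t)" for s t
  define Gt where "Gt s t = pdo None u (z + s *\<^sub>R axis i 1) (x + t)" for s t
  define Gst where "Gst s t = pdo (Some i) (pdo None u) (z + s *\<^sub>R axis i 1) (x + t)" for s t
  have "((\<lambda>t. Gs 0 t) has_real_derivative Gst 0 0) (at 0)"
  proof (rule has_real_derivative_mixed_partial[where G=G and Gs=Gs and Gt=Gt and Gst=Gst, OF r])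
    fix s t :: real assume st: "\<bar>s\<bar> < r" "\<bar>t\<bar> < r"
    have "((\<lambda>\<tau>. u (z + (\<tau> + s) *\<^sub>R axis i 1) (x + t)) has_real_derivative Gs s t) (at 0)"
      using pdiffable_has_pdo[OF d1[OF inF[OF st]]] unfolding line_Some Gs_def .
    then show "((\<lambda>s'. G s' t) has_real_derivative Gs s t) (at s)"
      unfolding G_def using DERIV_shift[of "\<lambda>s'. u (z + s' *\<^sub>R axis i 1) (x + t)" _ 0 s] by simp
    have "((\<lambda>\<tau>. u (z + s *\<^sub>R axis i 1) (x + (\<tau> + t))) has_real_derivative Gt s t) (at 0)"
      using pdiffable_has_pdo[OF d2[OF inF[OF st]]] unfolding line_None Gt_def .
    then show "((\<lambda>t'. G s t') has_real_derivative Gt s t) (at t)"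
      unfolding G_def using DERIV_shift[of "\<lambda>t'. u (z + s *\<^sub>R axis i 1) (x + t')" _ 0 t] by simp
    have "((\<lambda>\<tau>. pdo None u (z + (\<tau> + s) *\<^sub>R axis i 1) (x + t)) has_real_derivative Gst s t) (at 0)"
      using pdiffable_has_pdo[OF d3[OF inF[OF st]]] unfolding line_Some Gst_def .
    then show "((\<lambda>s'. Gt s' t) has_real_derivative Gst s t) (at s)"
      unfolding Gt_def using DERIV_shift[of "\<lambda>s'. pdo None u (z + s' *\<^sub>R axis i 1) (x + t)" _ 0 s]
      by simp
  next
    fix e :: real assume "e > 0"
    moreover have "isCont (case_prod (pdo (Some i) (pdo None u))) (z, x)"
      using cont F continuous_on_eq_continuous_at by blast
    ultimately show "\<exists>d>0. \<forall>s t. \<bar>s\<bar> < d \<longrightarrow> \<bar>t\<bar> < d \<longrightarrow> \<bar>Gst s t - Gst 0 0\<bar> \<le> e"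
      unfolding Gst_def using isCont_coord_shift by simp
  qed
  moreover have "(\<lambda>t. Gs 0 t) = line_fun None (pdo (Some i) u) z x"
    by (rule ext) (simp add: Gs_def line_fun_def)
  ultimately show ?thesis
    using pdiffable_pdoI by (simp add: Gst_def)
qed

lemma Ck2_differentiable:
  assumes "open E" "Ck 2 E g" "w \<in> E"
  shows "g differentiable at w" "pd i g differentiable at w"
proof -
  have "Ck (Suc (Suc 0)) E g"
    using assms(2) by (simp add: numeral_2_eq_2)
  then have "g differentiable_on E" "pd i g differentiable_on E"
    by auto
  then show "g differentiable at w" "pd i g differentiable at w"
    using assms(1,3) differentiable_on_eq_differentiable_at by blast+
qed

lemma Ck1_differentiable:
  assumes "open E" "Ck 1 E g" "w \<in> E"
  shows "g differentiable at w"
proof -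
  have "g differentiable_on E"
    using assms(2) by (simp add: One_nat_def)
  then show ?thesis
    using assms(1,3) differentiable_on_eq_differentiable_at by blast
qed

lemma CkF2_imp_pdiffable2_on:
  assumes "open F" "CkF 2 F u"
  shows "pdiffable2_on F u" "continuous_on F (case_prod (pdo b (pdo a u)))"
proof -
  have C2: "CkF (Suc (Suc 0)) F u"
    using assms(2) by (simp add: numeral_2_eq_2)
  then have diff: "case_prod u differentiable_on F" "\<And>a. case_prod (pdo a u) differentiable_on F"
    by auto
  from C2 show "continuous_on F (case_prod (pdo b (pdo a u)))"
    by auto
  have "pdiffable_on F v" if "case_prod v differentiable_on F" for v
    unfolding pdiffable_on_def
  proof (intro allI impI)
    fix w y a assume "(w, y) \<in> F"
    then have "case_prod v differentiable at (w, y)"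
      using that assms(1) differentiable_on_eq_differentiable_at by blast
    then show "pdiffable a v w y"
      by (rule differentiable_imp_pdiffable)
  qed
  then show "pdiffable2_on F u"
    unfolding pdiffable2_on_def using diff by blast
qed

section \<open>The algebraic identity\<close>

lemma sum_UNIV_option:
  fixes g :: "'d::finite option \<Rightarrow> 'a::comm_monoid_add"
  shows "(\<Sum>a\<in>UNIV. g a) = g None + (\<Sum>i\<in>UNIV. g (Some i))"
proof -
  have "(\<Sum>a\<in>UNIV. g a) = g None + sum g (range Some)"
    unfolding UNIV_option_conv by (subst sum.insert) auto
  also have "sum g (range Some) = (\<Sum>i\<in>UNIV. g (Some i))"
    by (subst sum.reindex) (auto simp: inj_on_def)
  finally show ?thesis .
qed

lemma sum_sum_sym_swap:
  fixes C :: "'d::finite \<Rightarrow> 'd \<Rightarrow> real"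
  assumes "\<And>i j. C i j = C j i"
  shows "(\<Sum>i\<in>UNIV. \<Sum>j\<in>UNIV. C i j * u i * v j) = (\<Sum>i\<in>UNIV. (\<Sum>j\<in>UNIV. C i j * u j) * v i)"
  unfolding sum_distrib_right by (subst sum.swap) (auto intro!: sum.cong simp: assms mult_ac)

lemma sum_sum_diag_swap:
  fixes Cd :: "'d::finite \<Rightarrow> 'd \<Rightarrow> 'd \<Rightarrow> real"
  assumes "\<And>k i j. Cd k i j = Cd k j i"
  shows "(\<Sum>i\<in>UNIV. \<Sum>j\<in>UNIV. Cd i i j * u j) = (\<Sum>i\<in>UNIV. (\<Sum>j\<in>UNIV. Cd j i j) * u i)"
  unfolding sum_distrib_right by (subst sum.swap) (auto intro!: sum.cong simp: assms)

text \<open>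
  The terms of \<open>\<partial>\<^sub>z\<^sub>z\<close> type in the adjoint: \<open>\<partial>\<^sub>i\<partial>\<^sub>j(c\<^sup>i\<^sup>j P H)\<close> expanded by the product rule,
  with \<open>C\<close>, \<open>Cd\<close>, \<open>Cdd\<close> standing for \<open>c\<close> and its first and second partials.
\<close>
lemma sum_second_order_zz:
  fixes C Cdd Pdd Hzz :: "'d::finite \<Rightarrow> 'd \<Rightarrow> real" and Cd :: "'d \<Rightarrow> 'd \<Rightarrow> 'd \<Rightarrow> real"
    and Pd Hz :: "'d \<Rightarrow> real" and P H :: real
  assumes C_sym: "\<And>i j. C i j = C j i" and Cd_sym: "\<And>k i j. Cd k i j = Cd k j i"
  defines "D \<equiv> \<lambda>i. \<Sum>j\<in>UNIV. Cd j i j" and "CP \<equiv> \<lambda>i. \<Sum>j\<in>UNIV. C i j * Pd j"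
  shows "(\<Sum>i\<in>UNIV. \<Sum>j\<in>UNIV. Cdd i j * (P * H) + Cd j i j * (Pd i * H + P * Hz i)
            + Cd i i j * (Pd j * H + P * Hz j)
            + C i j * (Pdd i j * H + Pd j * Hz i + Pd i * Hz j + P * Hzz i j))
    = (\<Sum>i\<in>UNIV. \<Sum>j\<in>UNIV. Cdd i j) * (P * H)
      + 2 * ((\<Sum>i\<in>UNIV. D i * Pd i) * H + P * (\<Sum>i\<in>UNIV. D i * Hz i))
      + (\<Sum>i\<in>UNIV. \<Sum>j\<in>UNIV. C i j * Pdd i j) * H + 2 * (\<Sum>i\<in>UNIV. CP i * Hz i)
      + P * (\<Sum>i\<in>UNIV. \<Sum>j\<in>UNIV. C i j * Hzz i j)" (is "?L = _")
proof -
  have "?L = (\<Sum>i\<in>UNIV. \<Sum>j\<in>UNIV. Cdd i j) * (P * H)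
       + (\<Sum>i\<in>UNIV. \<Sum>j\<in>UNIV. Cd j i j * (Pd i * H + P * Hz i))
       + (\<Sum>i\<in>UNIV. \<Sum>j\<in>UNIV. Cd i i j * (Pd j * H + P * Hz j))
       + (\<Sum>i\<in>UNIV. \<Sum>j\<in>UNIV. C i j * Pdd i j) * H
       + (\<Sum>i\<in>UNIV. \<Sum>j\<in>UNIV. C i j * Pd j * Hz i)
       + (\<Sum>i\<in>UNIV. \<Sum>j\<in>UNIV. C i j * Pd i * Hz j)
       + P * (\<Sum>i\<in>UNIV. \<Sum>j\<in>UNIV. C i j * Hzz i j)"
    by (simp add: sum.distrib sum_distrib_left sum_distrib_right algebra_simps)
  also have "(\<Sum>i\<in>UNIV. \<Sum>j\<in>UNIV. Cd j i j * (Pd i * H + P * Hz i))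
      = (\<Sum>i\<in>UNIV. D i * Pd i) * H + P * (\<Sum>i\<in>UNIV. D i * Hz i)"
    unfolding D_def by (simp add: sum.distrib sum_distrib_left sum_distrib_right algebra_simps)
  also have "(\<Sum>i\<in>UNIV. \<Sum>j\<in>UNIV. Cd i i j * (Pd j * H + P * Hz j))
      = (\<Sum>i\<in>UNIV. D i * Pd i) * H + P * (\<Sum>i\<in>UNIV. D i * Hz i)"
    by (subst sum_sum_diag_swap[where Cd=Cd, OF Cd_sym])
      (simp add: D_def sum.distrib sum_distrib_left sum_distrib_right algebra_simps)
  also have "(\<Sum>i\<in>UNIV. \<Sum>j\<in>UNIV. C i j * Pd j * Hz i) = (\<Sum>i\<in>UNIV. CP i * Hz i)"
    unfolding CP_def by (simp add: sum_distrib_right)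
  also have "(\<Sum>i\<in>UNIV. \<Sum>j\<in>UNIV. C i j * Pd i * Hz j) = (\<Sum>i\<in>UNIV. CP i * Hz i)"
    unfolding CP_def by (rule sum_sum_sym_swap[where C=C, OF C_sym])
  finally show ?thesis by simp
qed

text \<open>
  The identity \<open>\<tilde>L\<^sup>R(P H) = P \<partial>\<^sub>x(L\<psi>)\<close> at a single point, with all partial derivatives
  replaced by independent real numbers. \<open>Tzz, Tzx, Txz, Txx\<close> are the second order terms
  \<open>\<partial>\<^sub>a\<partial>\<^sub>b(A\<^sup>a\<^sup>b P H)\<close> and \<open>Uz, Ux\<close> the first order terms \<open>\<partial>\<^sub>a(b\<^sup>R\<^sup>a P H)\<close>; \<open>G\<close> is the
  coefficient of \<open>-x\<close> in \<open>b\<^sup>R\<^sub>x\<close>. The difference of the two sides is \<open>-H\<close> times the left-hand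
  side of \<open>stationary\<close>.
\<close>
lemma adjoint_identity_algebra:
  fixes C Cdd Pdd Hzz Thd :: "'d::finite \<Rightarrow> 'd \<Rightarrow> real" and Cd :: "'d \<Rightarrow> 'd \<Rightarrow> 'd \<Rightarrow> real"
    and Pd Hz Hzx Hxz M Md Th :: "'d \<Rightarrow> real"
    and P H Hx Hxx X Q A F G :: real
  assumes C_sym: "\<And>i j. C i j = C j i"
    and Cd_sym: "\<And>k i j. Cd k i j = Cd k j i"
    and H_mixed: "\<And>i. Hzx i = Hxz i"
    and stationary: "(1/2) * (\<Sum>i\<in>UNIV. \<Sum>j\<in>UNIV. C i j * Pdd i j)
             - (\<Sum>i\<in>UNIV. (M i - (\<Sum>j\<in>UNIV. Cd j i j)) * Pd i)
             - ((\<Sum>i\<in>UNIV. Md i) - (1/2) * (\<Sum>i\<in>UNIV. \<Sum>j\<in>UNIV. Cdd i j)) * P = 0"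
    and G_eq: "G * P = A * P - (\<Sum>i\<in>UNIV. Th i * (\<Sum>j\<in>UNIV. C i j * Pd j))
               - P * (\<Sum>i\<in>UNIV. \<Sum>j\<in>UNIV. Cd i i j * Th j + C i j * Thd i j)"
  defines "V \<equiv> \<lambda>i. \<Sum>j\<in>UNIV. C i j * Th j"
    and "Vd \<equiv> \<lambda>k i. \<Sum>j\<in>UNIV. Cd k i j * Th j + C i j * Thd k j"
    and "W \<equiv> \<lambda>j. \<Sum>i\<in>UNIV. Th i * C i j"
    and "Wd \<equiv> \<lambda>k j. \<Sum>i\<in>UNIV. Thd k i * C i j + Th i * Cd k i j"
  defines "Tzz \<equiv> \<lambda>i j. Cdd i j * (P * H) + Cd j i j * (Pd i * H + P * Hz i)
                 + Cd i i j * (Pd j * H + P * Hz j)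
                 + C i j * (Pdd i j * H + Pd j * Hz i + Pd i * Hz j + P * Hzz i j)"
    and "Tzx \<equiv> \<lambda>i. Vd i i * (P * H) + V i * (Pd i * H + P * Hz i) + X * Vd i i * (P * Hx)
                 + X * V i * (Pd i * Hx + P * Hzx i)"
    and "Txz \<equiv> \<lambda>j. Wd j j * (P * H) + X * Wd j j * (P * Hx) + W j * (Pd j * H + P * Hz j)
                 + X * W j * (Pd j * Hx + P * Hxz j)"
    and "Txx \<equiv> 2 * Q * (P * H) + 2 * (2 * X * Q) * (P * Hx) + X * X * Q * (P * Hxx)"
    and "Uz \<equiv> \<lambda>i. ((\<Sum>j\<in>UNIV. Cd i i j * Pd j + C i j * Pdd i j) + (\<Sum>j\<in>UNIV. Cdd i j) * P
                  + (\<Sum>j\<in>UNIV. Cd j i j) * Pd i - (Md i * P + M i * Pd i)) * H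
               + ((\<Sum>j\<in>UNIV. C i j * Pd j) + (\<Sum>j\<in>UNIV. Cd j i j) * P - M i * P) * Hz i"
    and "Ux \<equiv> - G * (P * H) + (F - X * G) * (P * Hx)"
  shows "(1/2) * ((\<Sum>i\<in>UNIV. \<Sum>j\<in>UNIV. Tzz i j) + (\<Sum>i\<in>UNIV. Tzx i) + (\<Sum>j\<in>UNIV. Txz j) + Txx)
          - ((\<Sum>i\<in>UNIV. Uz i) + Ux)
       = P * ((1/2) * ((\<Sum>i\<in>UNIV. \<Sum>j\<in>UNIV. C i j * Hzz i j)
                 + (\<Sum>i\<in>UNIV. V i * Hz i + X * V i * Hxz i)
                 + (\<Sum>j\<in>UNIV. W j * Hz j + X * W j * Hxz j)
                 + (2 * X * Q * Hx + X * X * Q * Hxx))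
              + (\<Sum>i\<in>UNIV. M i * Hz i) + (A + Q) * H + (- F + X * (A + Q)) * Hx)"
    (is "?L = ?R")
proof -
  define D where "D i = (\<Sum>j\<in>UNIV. Cd j i j)" for i
  define CP where "CP i = (\<Sum>j\<in>UNIV. C i j * Pd j)" for i
  have W_eq: "W j = V j" for j
    unfolding W_def V_def by (rule sum.cong) (auto simp: C_sym mult.commute)
  have Wd_eq: "Wd j j = Vd j j" for j
    unfolding Wd_def Vd_def by (rule sum.cong) (auto simp: C_sym Cd_sym[of j j] mult.commute)
  have sum_Tzx_Txz: "(\<Sum>i\<in>UNIV. Tzx i) = 2 * ((\<Sum>i\<in>UNIV. Vd i i) * (P * H)
       + (\<Sum>i\<in>UNIV. V i * Pd i) * H + P * (\<Sum>i\<in>UNIV. V i * Hz i)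
       + X * (\<Sum>i\<in>UNIV. Vd i i) * (P * Hx) + X * (\<Sum>i\<in>UNIV. V i * Pd i) * Hx
       + X * P * (\<Sum>i\<in>UNIV. V i * Hxz i)) - (\<Sum>j\<in>UNIV. Txz j)"
    unfolding Tzx_def Txz_def W_eq Wd_eq H_mixed
    by (simp add: sum.distrib sum_distrib_left sum_distrib_right algebra_simps)
  have sum_Uz: "(\<Sum>i\<in>UNIV. Uz i) =
      ((\<Sum>i\<in>UNIV. D i * Pd i) + (\<Sum>i\<in>UNIV. \<Sum>j\<in>UNIV. C i j * Pdd i j)
         + (\<Sum>i\<in>UNIV. \<Sum>j\<in>UNIV. Cdd i j) * P + (\<Sum>i\<in>UNIV. D i * Pd i)
         - (\<Sum>i\<in>UNIV. Md i) * P - (\<Sum>i\<in>UNIV. M i * Pd i)) * H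
      + (\<Sum>i\<in>UNIV. CP i * Hz i) + P * (\<Sum>i\<in>UNIV. D i * Hz i) - P * (\<Sum>i\<in>UNIV. M i * Hz i)"
  proof -
    have "(\<Sum>i\<in>UNIV. Uz i) =
      ((\<Sum>i\<in>UNIV. \<Sum>j\<in>UNIV. Cd i i j * Pd j) + (\<Sum>i\<in>UNIV. \<Sum>j\<in>UNIV. C i j * Pdd i j)
         + (\<Sum>i\<in>UNIV. \<Sum>j\<in>UNIV. Cdd i j) * P + (\<Sum>i\<in>UNIV. D i * Pd i)
         - (\<Sum>i\<in>UNIV. Md i) * P - (\<Sum>i\<in>UNIV. M i * Pd i)) * H
      + (\<Sum>i\<in>UNIV. CP i * Hz i) + P * (\<Sum>i\<in>UNIV. D i * Hz i) - P * (\<Sum>i\<in>UNIV. M i * Hz i)"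
      unfolding Uz_def D_def CP_def
      by (simp add: sum.distrib sum_subtractf sum_distrib_left sum_distrib_right algebra_simps)
    then show ?thesis
      using sum_sum_diag_swap[where Cd=Cd, OF Cd_sym, where u=Pd] unfolding D_def by simp
  qed
  have split_sum: "(\<Sum>i\<in>UNIV. V i * Hz i + X * V i * Hxz i)
      = (\<Sum>i\<in>UNIV. V i * Hz i) + X * (\<Sum>i\<in>UNIV. V i * Hxz i)" for V :: "'d \<Rightarrow> real"
    by (simp add: sum.distrib sum_distrib_left algebra_simps)
  have G_P: "G * P = A * P - (\<Sum>i\<in>UNIV. V i * Pd i) - P * (\<Sum>i\<in>UNIV. Vd i i)"
    using G_eq sum_sum_sym_swap[where C=C, OF C_sym, where u=Pd and v=Th] unfolding V_def Vd_def
    by (simp add: sum_distrib_left sum_distrib_right mult_ac)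
  have Ux_eq: "Ux = - (G * P) * H + F * P * Hx - X * (G * P) * Hx"
    unfolding Ux_def by (simp add: algebra_simps)
  have "?L - ?R = - H * ((1/2) * (\<Sum>i\<in>UNIV. \<Sum>j\<in>UNIV. C i j * Pdd i j)
       - (\<Sum>i\<in>UNIV. M i * Pd i) + (\<Sum>i\<in>UNIV. D i * Pd i) - (\<Sum>i\<in>UNIV. Md i) * P
       + (1/2) * (\<Sum>i\<in>UNIV. \<Sum>j\<in>UNIV. Cdd i j) * P)"
    unfolding Tzz_def sum_second_order_zz[where C=C and Cd=Cd, OF C_sym Cd_sym] sum_Uz sum_Tzx_Txz
      Ux_eq G_P W_eq split_sum Txx_def D_def[symmetric] CP_def[symmetric]
    by (simp add: algebra_simps)
  also have "\<dots> = 0"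
    using stationary unfolding D_def by (simp add: sum_subtractf left_diff_distrib algebra_simps)
  finally show ?thesis by simp
qed

section \<open>The identity under the standing assumptions\<close>

locale adjoint_setting =
  fixes E :: "(real^'d::finite) set"
    and c :: "real^'d \<Rightarrow> real^'d^'d"
    and \<theta> m :: "real^'d \<Rightarrow> real^'d"
    and \<eta> :: "real^'d \<Rightarrow> real^'k::finite"
    and p a f :: "real^'d \<Rightarrow> real"
    and h :: "real^'d \<Rightarrow> real \<Rightarrow> real"
  assumes open_E: "open E"
    and c_C2: "\<And>i j. Ck 2 E (\<lambda>z. c z $ i $ j)"
    and theta_C2: "\<And>j. Ck 2 E (\<lambda>z. \<theta> z $ j)"
    and eta_C2: "\<And>k. Ck 2 E (\<lambda>z. \<eta> z $ k)"
    and p_C2: "Ck 2 E p"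
    and m_C1: "\<And>i. Ck 1 E (\<lambda>z. m z $ i)"
    and c_symmetric: "\<And>z. z \<in> E \<Longrightarrow> transpose (c z) = c z"
    and p_pos: "\<And>z. z \<in> E \<Longrightarrow> p z > 0"
    and p_stationary: "\<And>z. z \<in> E \<Longrightarrow> LZadj m c p z = 0"
    and h_C2: "CkF 2 (E \<times> {0<..}) h"
    and h_integrable: "\<forall>z\<in>E. \<forall>x>0. h z integrable_on {0..x}"
    and psi_C2: "CkF 2 (E \<times> {0<..}) (\<lambda>z x. integral {0..x} (h z))"
begin

lemma open_domain: "open (E \<times> {(0::real)<..})"
  using open_E open_greaterThan[of "0::real"] by (rule open_Times)

lemmas pdo2_arith_domain [simp] = pdo2_arith[OF open_domain]
lemmas pdo2_sum_domain [simp] = pdo2_sum[OF open_domain]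
lemmas pdiffable2_on_arith_domain [simp] = pdiffable2_on_arith[OF open_domain]

lemma pdiffable2_on_domainD [simp]:
  "pdiffable2_on (E \<times> {0<..}) u \<Longrightarrow> (w, y) \<in> E \<times> {0<..} \<Longrightarrow> pdiffable o1 u w y"
  "pdiffable2_on (E \<times> {0<..}) u \<Longrightarrow> (w, y) \<in> E \<times> {0<..} \<Longrightarrow> pdiffable o1 (pdo o2 u) w y"
  by (fact pdiffable2_onD)+

lemma coefficients_differentiable:
  assumes "w \<in> E"
  shows "(\<lambda>z. c z $ i $ j) differentiable at w" "pd k (\<lambda>z. c z $ i $ j) differentiable at w"
    and "(\<lambda>z. \<theta> z $ j) differentiable at w" "pd k (\<lambda>z. \<theta> z $ j) differentiable at w"
    and "(\<lambda>z. \<eta> z $ l) differentiable at w" "pd k (\<lambda>z. \<eta> z $ l) differentiable at w"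
    and "p differentiable at w" "pd k p differentiable at w"
    and "(\<lambda>z. m z $ i) differentiable at w"
  using Ck2_differentiable[OF open_E c_C2 assms] Ck2_differentiable[OF open_E theta_C2 assms]
    Ck2_differentiable[OF open_E eta_C2 assms] Ck2_differentiable[OF open_E p_C2 assms]
    Ck1_differentiable[OF open_E m_C1 assms]
  by auto

lemma pdiffable2_on_coefficients [simp]:
  "pdiffable2_on (E \<times> {0<..}) (\<lambda>w y. c w $ i $ j)"
  "pdiffable2_on (E \<times> {0<..}) (\<lambda>w y. \<theta> w $ j)"
  "pdiffable2_on (E \<times> {0<..}) (\<lambda>w y. \<eta> w $ l)"
  "pdiffable2_on (E \<times> {0<..}) (\<lambda>w y. p w)"
  by (rule pdiffable2_on_const_x; auto intro: coefficients_differentiable)+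

lemma pdiffable2_on_h [simp]: "pdiffable2_on (E \<times> {0<..}) h"
  using CkF2_imp_pdiffable2_on[OF open_domain h_C2] by blast

lemma pdiffable_first_derivatives [simp]:
  assumes "(w, y) \<in> E \<times> {0<..}"
  shows "pdiffable o1 (\<lambda>w y. pd k (\<lambda>w. c w $ i $ j) w) w y"
    and "pdiffable o1 (\<lambda>w y. pd k p w) w y"
    and "pdiffable o1 (\<lambda>w y. m w $ i) w y"
  using assms
  by (cases o1; auto intro!: pdiffable_Some_const_x coefficients_differentiable)+

lemma pdo_Some_coefficients [simp]:
  "pdo (Some k) (\<lambda>w y. c w $ i $ j) = (\<lambda>w y. pd k (\<lambda>w. c w $ i $ j) w)"
  "pdo (Some k) (\<lambda>w y. \<theta> w $ j) = (\<lambda>w y. pd k (\<lambda>w. \<theta> w $ j) w)"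
  "pdo (Some k) (\<lambda>w y. \<eta> w $ l) = (\<lambda>w y. pd k (\<lambda>w. \<eta> w $ l) w)"
  "pdo (Some k) (\<lambda>w y. m w $ j) = (\<lambda>w y. pd k (\<lambda>w. m w $ j) w)"
  "pdo (Some k) (\<lambda>w y. p w) = (\<lambda>w y. pd k p w)"
  "pdo (Some k) (\<lambda>w y. pd n g w) = (\<lambda>w y. pd k (pd n g) w)"
  by (rule pdo_Some_const_x)+

lemma pdo2_zz_Amat:
  assumes z: "z \<in> E" and x: "x > 0"
  shows "pdo (Some i) (pdo (Some j) (\<lambda>w y. Amat c \<theta> \<eta> (Some i) (Some j) w y * (p w * h w y))) z x =
    pd i (pd j (\<lambda>w. c w $ i $ j)) z * (p z * h z x)
    + pd j (\<lambda>w. c w $ i $ j) z * (pd i p z * h z x + p z * pdo (Some i) h z x)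
    + pd i (\<lambda>w. c w $ i $ j) z * (pd j p z * h z x + p z * pdo (Some j) h z x)
    + c z $ i $ j * (pd i (pd j p) z * h z x + pd j p z * pdo (Some i) h z x
        + pd i p z * pdo (Some j) h z x + p z * pdo (Some i) (pdo (Some j) h) z x)"
  using z x by (simp add: Amat_def)

lemma pdo2_zx_Amat:
  assumes z: "z \<in> E" and x: "x > 0"
  shows "pdo (Some i) (pdo None (\<lambda>w y. Amat c \<theta> \<eta> (Some i) None w y * (p w * h w y))) z x =
    (\<Sum>j\<in>UNIV. pd i (\<lambda>w. c w $ i $ j) z * \<theta> z $ j + c z $ i $ j * pd i (\<lambda>w. \<theta> w $ j) z) * (p z * h z x)
    + (\<Sum>j\<in>UNIV. c z $ i $ j * \<theta> z $ j) * (pd i p z * h z x + p z * pdo (Some i) h z x)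
    + x * (\<Sum>j\<in>UNIV. pd i (\<lambda>w. c w $ i $ j) z * \<theta> z $ j + c z $ i $ j * pd i (\<lambda>w. \<theta> w $ j) z) * (p z * pdo None h z x)
    + x * (\<Sum>j\<in>UNIV. c z $ i $ j * \<theta> z $ j) * (pd i p z * pdo None h z x + p z * pdo (Some i) (pdo None h) z x)"
  using z x by (simp add: Amat_def matrix_vector_mult_def)

lemma pdo2_xz_Amat:
  assumes z: "z \<in> E" and x: "x > 0"
  shows "pdo None (pdo (Some j) (\<lambda>w y. Amat c \<theta> \<eta> None (Some j) w y * (p w * h w y))) z x =
    (\<Sum>i\<in>UNIV. pd j (\<lambda>w. \<theta> w $ i) z * c z $ i $ j + \<theta> z $ i * pd j (\<lambda>w. c w $ i $ j) z) * (p z * h z x)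
    + x * (\<Sum>i\<in>UNIV. pd j (\<lambda>w. \<theta> w $ i) z * c z $ i $ j + \<theta> z $ i * pd j (\<lambda>w. c w $ i $ j) z) * (p z * pdo None h z x)
    + (\<Sum>i\<in>UNIV. \<theta> z $ i * c z $ i $ j) * (pd j p z * h z x + p z * pdo (Some j) h z x)
    + x * (\<Sum>i\<in>UNIV. \<theta> z $ i * c z $ i $ j) * (pd j p z * pdo None h z x + p z * pdo None (pdo (Some j) h) z x)"
  using z x by (simp add: Amat_def vector_matrix_mult_def)

lemma pdo2_xx_Amat:
  assumes z: "z \<in> E" and x: "x > 0"
  shows "pdo None (pdo None (\<lambda>w y. Amat c \<theta> \<eta> None None w y * (p w * h w y))) z x =
    2 * (\<theta> z \<bullet> (c z *v \<theta> z) + \<eta> z \<bullet> \<eta> z) * (p z * h z x)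
    + 2 * (2 * x * (\<theta> z \<bullet> (c z *v \<theta> z) + \<eta> z \<bullet> \<eta> z)) * (p z * pdo None h z x)
    + x * x * (\<theta> z \<bullet> (c z *v \<theta> z) + \<eta> z \<bullet> \<eta> z) * (p z * pdo None (pdo None h) z x)"
  using z x by (simp add: Amat_def power2_eq_square matrix_vector_mult_def inner_vec_def)

lemma pd_eq_pdo_Some: "pd i g z = pdo (Some i) (\<lambda>w y. g w) z x"
  by (simp add: pdo_Some_const_x)

lemma pdo_z_bR:
  assumes z: "z \<in> E" and x: "x > 0"
  shows "pdo (Some i) (\<lambda>w y. bR m c a \<theta> f p (Some i) w y * (p w * h w y)) z x =
    ((\<Sum>j\<in>UNIV. pd i (\<lambda>w. c w $ i $ j) z * pd j p z + c z $ i $ j * pd i (pd j p) z)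
      + (\<Sum>j\<in>UNIV. pd i (pd j (\<lambda>w. c w $ i $ j)) z) * p z
      + (\<Sum>j\<in>UNIV. pd j (\<lambda>w. c w $ i $ j) z) * pd i p z
      - (pd i (\<lambda>w. m w $ i) z * p z + m z $ i * pd i p z)) * h z x
    + ((\<Sum>j\<in>UNIV. c z $ i $ j * pd j p z) + (\<Sum>j\<in>UNIV. pd j (\<lambda>w. c w $ i $ j) z) * p z - m z $ i * p z)
      * pdo (Some i) h z x" (is "_ = ?R")
proof -
  have eq: "bR m c a \<theta> f p (Some i) w y * (p w * h w y) =
     ((\<Sum>j\<in>UNIV. c w $ i $ j * pd j p w) + (\<Sum>j\<in>UNIV. pd j (\<lambda>w. c w $ i $ j) w) * p w - m w $ i * p w) * h w y"
    if "(w, y) \<in> E \<times> {0<..}" for w y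
  proof -
    have pw: "p w > 0" using that p_pos by auto
    show ?thesis
      unfolding bR_def using pw
      by (simp add: matrix_vector_mult_def grad_def divc_def field_simps sum_distrib_left sum_divide_distrib)
  qed
  have "pdo (Some i) (\<lambda>w y. bR m c a \<theta> f p (Some i) w y * (p w * h w y)) z x =
    pdo (Some i) (\<lambda>w y. ((\<Sum>j\<in>UNIV. c w $ i $ j * pd j p w) + (\<Sum>j\<in>UNIV. pd j (\<lambda>w. c w $ i $ j) w) * p w - m w $ i * p w) * h w y) z x"
    using z x by (intro pdo_cong[OF open_domain] eq) auto
  also have "\<dots> = ?R"
    using z x by simp
  finally show ?thesis .
qed

lemma pdo_x_bR:
  assumes z: "z \<in> E" and x: "x > 0"
  shows "pdo None (\<lambda>w y. bR m c a \<theta> f p None w y * (p w * h w y)) z x =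
    - (a z - \<theta> z \<bullet> ((c z *v grad p z) /\<^sub>R p z) - vdiv (\<lambda>w. c w *v \<theta> w) z) * (p z * h z x)
    + (f z - x * (a z - \<theta> z \<bullet> ((c z *v grad p z) /\<^sub>R p z) - vdiv (\<lambda>w. c w *v \<theta> w) z)) * (p z * pdo None h z x)"
  using z x by (simp add: bR_def)

lemma c_sym:
  assumes "z \<in> E"
  shows "c z $ i $ j = c z $ j $ i"
proof -
  have "transpose (c z) $ i $ j = c z $ j $ i"
    by (simp add: transpose_def)
  then show ?thesis
    using c_symmetric[OF assms] by simp
qed

lemma pd_c_sym:
  assumes "z \<in> E"
  shows "pd k (\<lambda>w. c w $ i $ j) z = pd k (\<lambda>w. c w $ j $ i) z"
proof -
  have "pd k (\<lambda>w. c w $ i $ j) z = pdo (Some k) (\<lambda>w y. c w $ i $ j) z 1"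
    by (rule pd_eq_pdo_Some)
  also have "\<dots> = pdo (Some k) (\<lambda>w y. c w $ j $ i) z 1"
    using assms by (intro pdo_cong[OF open_domain]) (auto simp: c_sym)
  also have "\<dots> = pd k (\<lambda>w. c w $ j $ i) z"
    by (rule pd_eq_pdo_Some[symmetric])
  finally show ?thesis .
qed

lemma vdiv_c_theta:
  assumes "z \<in> E"
  shows "vdiv (\<lambda>w. c w *v \<theta> w) z = (\<Sum>i\<in>UNIV. \<Sum>j\<in>UNIV.
           pd i (\<lambda>w. c w $ i $ j) z * \<theta> z $ j + c z $ i $ j * pd i (\<lambda>w. \<theta> w $ j) z)"
proof -
  have "pd i (\<lambda>w. (c w *v \<theta> w) $ i) z = pdo (Some i) (\<lambda>w y. \<Sum>j\<in>UNIV. c w $ i $ j * \<theta> w $ j) z 1" for i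
    by (simp add: pd_eq_pdo_Some[of i _ z 1] matrix_vector_mult_def)
  then show ?thesis
    using assms unfolding vdiv_def by simp
qed

lemma bR_x_coeff_mult_p:
  assumes z: "z \<in> E"
  shows "(a z - \<theta> z \<bullet> ((c z *v grad p z) /\<^sub>R p z) - vdiv (\<lambda>w. c w *v \<theta> w) z) * p z =
    a z * p z - (\<Sum>i\<in>UNIV. \<theta> z $ i * (\<Sum>j\<in>UNIV. c z $ i $ j * pd j p z))
    - p z * (\<Sum>i\<in>UNIV. \<Sum>j\<in>UNIV.
               pd i (\<lambda>w. c w $ i $ j) z * \<theta> z $ j + c z $ i $ j * pd i (\<lambda>w. \<theta> w $ j) z)"
proof -
  have "\<theta> z \<bullet> ((c z *v grad p z) /\<^sub>R p z) = (\<theta> z \<bullet> (c z *v grad p z)) / p z"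
    by (simp add: divide_inverse mult.commute)
  also have "\<theta> z \<bullet> (c z *v grad p z) = (\<Sum>i\<in>UNIV. \<theta> z $ i * (\<Sum>j\<in>UNIV. c z $ i $ j * pd j p z))"
    by (simp add: inner_vec_def matrix_vector_mult_def grad_def)
  finally show ?thesis
    using p_pos[OF z] unfolding vdiv_c_theta[OF z] by (simp add: field_simps)
qed

abbreviation psi :: "real^'d \<Rightarrow> real \<Rightarrow> real" where
  "psi \<equiv> \<lambda>z x. integral {0..x} (h z)"

lemma pdiffable2_on_psi [simp]: "pdiffable2_on (E \<times> {0<..}) psi"
  using CkF2_imp_pdiffable2_on[OF open_domain psi_C2] by blast

lemma continuous_on_pdo2_psi: "continuous_on (E \<times> {0<..}) (case_prod (pdo o2 (pdo o1 psi)))"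
  using CkF2_imp_pdiffable2_on[OF open_domain psi_C2] by blast

lemma continuous_on_pdo2_h: "continuous_on (E \<times> {0<..}) (case_prod (pdo o2 (pdo o1 h)))"
  using CkF2_imp_pdiffable2_on[OF open_domain h_C2] by blast

lemma pdo_x_psi:
  assumes wy: "(w, y) \<in> E \<times> {0<..}"
  shows "pdo None psi w y = h w y"
proof -
  have w: "w \<in> E" and y: "y > 0" using wy by auto
  have "(line_fun None h w y has_real_derivative pdo None h w y) (at 0)"
    using wy by (intro pdiffable_has_pdo) simp
  moreover have "line_fun None h w y = (\<lambda>t. h w (t + y))"
    by (rule ext) (simp add: line_fun_def add.commute)
  ultimately have "(h w has_real_derivative pdo None h w y) (at (0 + y))"
    by (simp only: DERIV_shift)
  then have "isCont (h w) y"
    using DERIV_isCont by simp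
  then have "((\<lambda>u. integral {0..u} (h w)) has_vector_derivative h w y) (at y within ({0..y+1} - {}))"
    using h_integrable w y
    by (intro integral_has_vector_derivative_continuous_at)
      (auto intro: continuous_at_imp_continuous_within)
  moreover have "at y within ({0..y+1} - {}) = at y"
    using y by (intro at_within_interior) simp
  ultimately have "((\<lambda>u. integral {0..u} (h w)) has_real_derivative h w y) (at y)"
    by (simp add: has_real_derivative_iff_has_vector_derivative)
  then show ?thesis
    unfolding pdo_def by (simp add: DERIV_imp_deriv)
qed

lemma pdo_x_pdo_z_psi:
  assumes wy: "(w, y) \<in> E \<times> {0<..}"
  shows "pdiffable None (pdo (Some j) psi) w y \<and> pdo None (pdo (Some j) psi) w y = pdo (Some j) h w y"
proof -
  have "pdiffable None (pdo (Some j) psi) w y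
      \<and> pdo None (pdo (Some j) psi) w y = pdo (Some j) (pdo None psi) w y"
    by (rule pdo_x_pdo_z_commute[OF open_domain wy]) (auto simp: continuous_on_pdo2_psi)
  moreover have "pdo (Some j) (pdo None psi) w y = pdo (Some j) h w y"
    using wy by (intro pdo_cong[OF open_domain]) (auto simp: pdo_x_psi)
  ultimately show ?thesis by simp
qed

lemma pdo_x_pdo_zz_psi:
  assumes zx: "(z, x) \<in> E \<times> {0<..}"
  shows "pdiffable None (pdo (Some i) (pdo (Some j) psi)) z x \<and>
         pdo None (pdo (Some i) (pdo (Some j) psi)) z x = pdo (Some i) (pdo (Some j) h) z x"
proof -
  have eq: "pdo None (pdo (Some j) psi) w y = pdo (Some j) h w y" if "(w, y) \<in> E \<times> {0<..}" for w y
    using pdo_x_pdo_z_psi[OF that] by blast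
  have eq2: "pdo (Some i) (pdo None (pdo (Some j) psi)) w y = pdo (Some i) (pdo (Some j) h) w y"
    if "(w, y) \<in> E \<times> {0<..}" for w y
    using that by (intro pdo_cong[OF open_domain] eq)
  have "pdiffable None (pdo (Some i) (pdo (Some j) psi)) z x \<and>
        pdo None (pdo (Some i) (pdo (Some j) psi)) z x = pdo (Some i) (pdo None (pdo (Some j) psi)) z x"
  proof (rule pdo_x_pdo_z_commute[OF open_domain zx])
    fix w :: "real^'d" and y :: real assume wy: "(w, y) \<in> E \<times> {0<..}"
    show "pdiffable (Some i) (pdo (Some j) psi) w y" "pdiffable None (pdo (Some j) psi) w y"
      using wy by simp_all
    show "pdiffable (Some i) (pdo None (pdo (Some j) psi)) w y"
      using pdiffable_cong[OF open_domain wy eq, where a="Some i"] wy by simp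
  next
    show "continuous_on (E \<times> {0<..}) (case_prod (pdo (Some i) (pdo None (pdo (Some j) psi))))"
      using continuous_on_pdo2_h[of "Some i" "Some j"]
      by (rule continuous_on_cong[THEN iffD2, OF refl, rotated]) (auto simp: eq2)
  qed
  then show ?thesis
    using eq2[OF zx] by simp
qed

lemma h_mixed_commute:
  assumes "(z, x) \<in> E \<times> {0<..}"
  shows "pdo (Some i) (pdo None h) z x = pdo None (pdo (Some i) h) z x"
  using pdo_x_pdo_z_commute[OF open_domain assms, of i h] by (auto simp: continuous_on_pdo2_h)

lemma psi_derivatives:
  assumes z: "z \<in> E" and x: "x > 0"
  shows "pdo None psi z x = h z x"
    "pdo (Some i) (pdo None psi) z x = pdo (Some i) h z x"
    "pdo None (pdo (Some i) psi) z x = pdo (Some i) h z x"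
    "pdo None (pdo None psi) z x = pdo None h z x"
    "pdiffable None psi z x"
    "pdiffable None (pdo (Some i) psi) z x"
    "pdiffable None (pdo (Some i) (pdo (Some j) psi)) z x"
    "pdo None (pdo (Some i) (pdo (Some j) psi)) z x = pdo (Some i) (pdo (Some j) h) z x"
    "pdiffable None (pdo (Some i) (pdo None psi)) z x"
    "pdo None (pdo (Some i) (pdo None psi)) z x = pdo None (pdo (Some i) h) z x"
    "pdiffable None (pdo None (pdo (Some i) psi)) z x"
    "pdo None (pdo None (pdo (Some i) psi)) z x = pdo None (pdo (Some i) h) z x"
    "pdiffable None (pdo None (pdo None psi)) z x"
    "pdo None (pdo None (pdo None psi)) z x = pdo None (pdo None h) z x"
proof -
  have zx: "(z, x) \<in> E \<times> {0<..}" using z x by simp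
  note e1 = pdo_x_psi
  have e2: "pdo o1 (pdo None psi) w y = pdo o1 h w y" if "(w, y) \<in> E \<times> {0<..}" for w y o1
    using that by (intro pdo_cong[OF open_domain] e1)
  have e3: "pdo None (pdo (Some i) psi) w y = pdo (Some i) h w y" if "(w, y) \<in> E \<times> {0<..}" for w y
    using pdo_x_pdo_z_psi[OF that] by blast
  show "pdo None psi z x = h z x" by (rule e1[OF zx])
  show "pdo (Some i) (pdo None psi) z x = pdo (Some i) h z x" by (rule e2[OF zx])
  show "pdo None (pdo (Some i) psi) z x = pdo (Some i) h z x" by (rule e3[OF zx])
  show "pdo None (pdo None psi) z x = pdo None h z x" by (rule e2[OF zx])
  show "pdiffable None psi z x" using zx by simp
  show "pdiffable None (pdo (Some i) psi) z x" using zx by simp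
  show "pdiffable None (pdo (Some i) (pdo (Some j) psi)) z x" using pdo_x_pdo_zz_psi[OF zx] by blast
  show "pdo None (pdo (Some i) (pdo (Some j) psi)) z x = pdo (Some i) (pdo (Some j) h) z x"
    using pdo_x_pdo_zz_psi[OF zx] by blast
  show "pdiffable None (pdo (Some i) (pdo None psi)) z x"
    using pdiffable_cong[OF open_domain zx e2, where a=None] zx by simp
  show "pdo None (pdo (Some i) (pdo None psi)) z x = pdo None (pdo (Some i) h) z x"
    using zx by (intro pdo_cong[OF open_domain] e2)
  show "pdiffable None (pdo None (pdo (Some i) psi)) z x"
    using pdiffable_cong[OF open_domain zx e3, where a=None] zx by simp
  show "pdo None (pdo None (pdo (Some i) psi)) z x = pdo None (pdo (Some i) h) z x"
    using zx by (intro pdo_cong[OF open_domain] e3)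
  show "pdiffable None (pdo None (pdo None psi)) z x"
    using pdiffable_cong[OF open_domain zx e2, where a=None] zx by simp
  show "pdo None (pdo None (pdo None psi)) z x = pdo None (pdo None h) z x"
    using zx by (intro pdo_cong[OF open_domain] e2)
qed

lemma pdo_x_genOp_psi:
  assumes z: "z \<in> E" and x: "x > 0"
  shows "pdo None (genOp (Amat c \<theta> \<eta>) (bL m c a \<theta> \<eta> f) psi) z x =
    1 / 2 *
     ((\<Sum>i\<in>UNIV. \<Sum>j\<in>UNIV. c z $ i $ j * pdo (Some i) (pdo (Some j) h) z x) +
      (\<Sum>i\<in>UNIV.
         (\<Sum>j\<in>UNIV. c z $ i $ j * \<theta> z $ j) * pdo (Some i) h z x +
         x * (\<Sum>j\<in>UNIV. c z $ i $ j * \<theta> z $ j) * pdo None (pdo (Some i) h) z x) +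
      (\<Sum>j\<in>UNIV.
         (\<Sum>i\<in>UNIV. \<theta> z $ i * c z $ i $ j) * pdo (Some j) h z x +
         x * (\<Sum>i\<in>UNIV. \<theta> z $ i * c z $ i $ j) * pdo None (pdo (Some j) h) z x) +
      (2 * x * (\<theta> z \<bullet> (c z *v \<theta> z) + \<eta> z \<bullet> \<eta> z) * pdo None h z x
        + x * x * (\<theta> z \<bullet> (c z *v \<theta> z) + \<eta> z \<bullet> \<eta> z) * pdo None (pdo None h) z x)) +
     (\<Sum>i\<in>UNIV. m z $ i * pdo (Some i) h z x) +
     (a z + (\<theta> z \<bullet> (c z *v \<theta> z) + \<eta> z \<bullet> \<eta> z)) * h z x +
     (- f z + x * (a z + (\<theta> z \<bullet> (c z *v \<theta> z) + \<eta> z \<bullet> \<eta> z))) * pdo None h z x"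
proof -
  have gen: "genOp (Amat c \<theta> \<eta>) (bL m c a \<theta> \<eta> f) psi =
    (\<lambda>w y. (1/2) * (\<Sum>o1\<in>UNIV. \<Sum>o2\<in>UNIV. Amat c \<theta> \<eta> o1 o2 w y * pdo o1 (pdo o2 psi) w y)
        + (\<Sum>o1\<in>UNIV. bL m c a \<theta> \<eta> f o1 w y * pdo o1 psi w y))"
    by (intro ext) (simp only: genOp_def)
  show ?thesis
    unfolding gen
    using z x
    by (simp add: sum_UNIV_option Amat_def bL_def psi_derivatives[OF z x] matrix_vector_mult_def vector_matrix_mult_def
        power2_eq_square)
      (simp add: algebra_simps sum.distrib)
qed

lemma adjOp_eq_p_pdo_x_genOp:
  assumes z: "z \<in> E" and x: "x > 0"
  shows "adjOp (Amat c \<theta> \<eta>) (bR m c a \<theta> f p) (\<lambda>z x. p z * h z x) z x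
       = p z * pdo None (genOp (Amat c \<theta> \<eta>) (bL m c a \<theta> \<eta> f) psi) z x"
proof -
  have zx: "(z, x) \<in> E \<times> {0<..}" using z x by simp
  let ?A = "Amat c \<theta> \<eta>" and ?b = "bR m c a \<theta> f p"
  have adjOp_split: "adjOp ?A ?b (\<lambda>z x. p z * h z x) z x =
     1/2 * ((\<Sum>i\<in>UNIV. \<Sum>j\<in>UNIV. pdo (Some i) (pdo (Some j) (\<lambda>w y. ?A (Some i) (Some j) w y * (p w * h w y))) z x)
       + (\<Sum>i\<in>UNIV. pdo (Some i) (pdo None (\<lambda>w y. ?A (Some i) None w y * (p w * h w y))) z x)
       + (\<Sum>j\<in>UNIV. pdo None (pdo (Some j) (\<lambda>w y. ?A None (Some j) w y * (p w * h w y))) z x)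
       + pdo None (pdo None (\<lambda>w y. ?A None None w y * (p w * h w y))) z x)
     - ((\<Sum>i\<in>UNIV. pdo (Some i) (\<lambda>w y. ?b (Some i) w y * (p w * h w y)) z x)
        + pdo None (\<lambda>w y. ?b None w y * (p w * h w y)) z x)"
    by (simp only: adjOp_def sum_UNIV_option sum.distrib add_ac)
  have stationary: "1/2 * (\<Sum>i\<in>UNIV. \<Sum>j\<in>UNIV. c z $ i $ j * pd i (pd j p) z)
      - (\<Sum>i\<in>UNIV. (m z $ i - (\<Sum>j\<in>UNIV. pd j (\<lambda>w. c w $ i $ j) z)) * pd i p z)
      - ((\<Sum>i\<in>UNIV. pd i (\<lambda>w. m w $ i) z)
         - 1/2 * (\<Sum>i\<in>UNIV. \<Sum>j\<in>UNIV. pd i (pd j (\<lambda>w. c w $ i $ j)) z)) * p z = 0"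
    using p_stationary[OF z] unfolding LZadj_def by simp
  show ?thesis
    unfolding adjOp_split pdo2_zz_Amat[OF z x] pdo2_zx_Amat[OF z x] pdo2_xz_Amat[OF z x]
      pdo2_xx_Amat[OF z x] pdo_z_bR[OF z x] pdo_x_bR[OF z x] pdo_x_genOp_psi[OF z x]
    by (rule adjoint_identity_algebra[where C="\<lambda>i j. c z $ i $ j" and Cd="\<lambda>k i j. pd k (\<lambda>w. c w $ i $ j) z"
      and Cdd="\<lambda>i j. pd i (pd j (\<lambda>w. c w $ i $ j)) z" and Pdd="\<lambda>i j. pd i (pd j p) z"
      and Hzz="\<lambda>i j. pdo (Some i) (pdo (Some j) h) z x" and Thd="\<lambda>k j. pd k (\<lambda>w. \<theta> w $ j) z"
      and Pd="\<lambda>i. pd i p z" and Hz="\<lambda>i. pdo (Some i) h z x" and Hzx="\<lambda>i. pdo (Some i) (pdo None h) z x"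
      and Hxz="\<lambda>i. pdo None (pdo (Some i) h) z x" and M="\<lambda>i. m z $ i" and Md="\<lambda>i. pd i (\<lambda>w. m w $ i) z"
      and Th="\<lambda>j. \<theta> z $ j" and P="p z" and H="h z x" and Hx="pdo None h z x"
      and Hxx="pdo None (pdo None h) z x" and X=x and Q="\<theta> z \<bullet> (c z *v \<theta> z) + \<eta> z \<bullet> \<eta> z"
      and A="a z" and F="f z" and G="a z - \<theta> z \<bullet> ((c z *v grad p z) /\<^sub>R p z) - vdiv (\<lambda>w. c w *v \<theta> w) z",
      OF c_sym[OF z] pd_c_sym[OF z] h_mixed_commute[OF zx] stationary bR_x_coeff_mult_p[OF z]])
qed

end

theorem lemmaA1:
  fixes E :: "(real^'d::finite) set"
    and \<gamma> \<epsilon> :: real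
    and m \<theta> :: "real^'d \<Rightarrow> real^'d"
    and c :: "real^'d \<Rightarrow> real^'d^'d"
    and p a f :: "real^'d \<Rightarrow> real"
    and \<eta> :: "real^'d \<Rightarrow> real^'k::finite"
    and h :: "real^'d \<Rightarrow> real \<Rightarrow> real"
  assumes gamma: "0 < \<gamma>" "\<gamma> \<le> 1"
    and E: "open E" "connected E"
    and A2: "Ckg_vec 1 \<gamma> E m" "Ckg_mat 2 \<gamma> E c" "\<forall>z\<in>E. spd (c z)"
    and A3: "\<forall>z\<in>E. p z > 0" "Ckg 2 \<gamma> E p" "set_integrable lborel E p"
            "(LINT z:E|lborel. p z) = 1" "\<forall>z\<in>E. LZadj m c p z = 0"
    and A4: "Ckg 1 \<gamma> E a" "\<forall>z\<in>E. a z \<ge> 0" "Ckg_vec 2 \<gamma> E \<eta>" "Ckg_vec 2 \<gamma> E \<theta>"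
    and A5: "\<forall>z\<in>E. f z \<ge> 0" "set_integrable lborel E (\<lambda>z. f z * p z)"
            "(LINT z:E|lborel. f z * p z) > 0" "\<epsilon> > 0"
            "set_integrable lborel E (\<lambda>z. max 0 (- (a z + (1 - \<epsilon>) / 2 *
                 (\<theta> z \<bullet> (c z *v \<theta> z) + \<eta> z \<bullet> \<eta> z))) * p z)"
            "(\<integral>\<^sup>+z\<in>E. ennreal (max 0 (a z + (1 - \<epsilon>) / 2 *
                 (\<theta> z \<bullet> (c z *v \<theta> z) + \<eta> z \<bullet> \<eta> z)) * p z) \<partial>lborel)
             > (\<integral>\<^sup>+z\<in>E. ennreal (max 0 (- (a z + (1 - \<epsilon>) / 2 *
                 (\<theta> z \<bullet> (c z *v \<theta> z) + \<eta> z \<bullet> \<eta> z))) * p z) \<partial>lborel)"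
    and eta_pos: "\<forall>z\<in>E. norm (\<eta> z) > 0"
    and f_C2: "Ck 2 E f"
    and h_C2: "CkF 2 (E \<times> {0<..}) h"
    and psi_def: "\<forall>z\<in>E. \<forall>x>0. h z integrable_on {0..x}"
    and psi_C2: "CkF 2 (E \<times> {0<..}) (\<lambda>z x. integral {0..x} (h z))"
  shows "(\<forall>z\<in>E. \<forall>x>0.
            adjOp (Amat c \<theta> \<eta>) (bR m c a \<theta> f p) (\<lambda>z x. p z * h z x) z x
            = p z * pdo None (genOp (Amat c \<theta> \<eta>) (bL m c a \<theta> \<eta> f)
                                    (\<lambda>z x. integral {0..x} (h z))) z x)
       \<and> ((\<forall>z\<in>E. \<forall>x>0. genOp (Amat c \<theta> \<eta>) (bL m c a \<theta> \<eta> f)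
                                 (\<lambda>z x. integral {0..x} (h z)) z x = 0)
           \<longrightarrow> (\<forall>z\<in>E. \<forall>x>0.
                 adjOp (Amat c \<theta> \<eta>) (bR m c a \<theta> f p) (\<lambda>z x. p z * h z x) z x = 0))"
proof -
  interpret adjoint_setting E c \<theta> m \<eta> p a f h
    using E(1) A2 A3(1,2,5) A4(3,4) h_C2 psi_def psi_C2
    by unfold_locales (auto simp: Ckg_def Ckg_vec_def Ckg_mat_def spd_def)
  have "pdo None (genOp (Amat c \<theta> \<eta>) (bL m c a \<theta> \<eta> f) psi) z x = 0"
    if "\<forall>z\<in>E. \<forall>x>0. genOp (Amat c \<theta> \<eta>) (bL m c a \<theta> \<eta> f) psi z x = 0" "z \<in> E" "x > 0" for z x
    using pdo_cong[OF open_domain, of z x _ "\<lambda>w y. 0"] that by simp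
  then show ?thesis
    using adjOp_eq_p_pdo_x_genOp by auto
qed

end
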